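(* Let $n\geq3$, $(R,\Lambda)$ a form ring, $C'\subseteq\mathrm{center}(R)$ a subring, $C$ the subring of $R$ of all finite sums of elements $c\bar c$ and $-c\bar c$ with $c\in C'$, and assume $R$ is a Noetherian $C$-module. Let $(I,\Gamma)$ be a form ideal of $(R,\Lambda)$ and $m$ a maximal ideal of $C$. Then there is $s_0\in S_m$ such that (1) if $x\in s_0R$ and $tx\in I$ for some $t\in S_m$, then $x\in I$; (2) if $x\in s_0R$ and $tx\in\Gamma$ for some $t\in S_m$, then $x\in\Gamma$. Moreover, $\phi_m$ is injective on $\psi(U_{2n}((R,\Lambda),(s_0R,s_0\Lambda)))$.
   Context: Rings are associative with $1\neq0$; $r\mapsto\bar r$ is an involution on $R$, $\lambda\in\mathrm{center}(R)$ with $\lambda\bar\lambda=1$. A form parameter is an additive subgroup $\Lambda$ with $\{r-\lambda\bar r\}\subseteq\Lambda\subseteq\{r:r=-\lambda\bar r\}$ and $r\Lambda\bar r\subseteq\Lambda$ for all $r$. A form ideal $(I,\Gamma)$: $I$ an ideal with $\bar I=I$, $\Gamma$ an additive subgroup with $\{\xi-\lambda\bar\xi:\xi\in I\}+\langle\zeta\alpha\bar\zeta:\zeta\in I,\alpha\in\Lambda\rangle\subseteq\Gamma\subseteq I\cap\Lambda$ and $\alpha\Gamma\bar\alpha\subseteq\Gamma$ for all $\alpha\in R$. Indices $\Omega=\{1,\dots,n,-n,\dots,-1\}$; for columns $u,v$: $\mathbbm{f}(u,v)=\sum_{i=1}^n\bar u_iv_{-i}$, $\mathbbm{h}(u,v)=\sum_{i=1}^n(\bar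 u_iv_{-i}+\lambda\bar u_{-i}v_i)$. $U_{2n}(R,\Lambda)$ = all $\sigma\in GL_{2n}(R)$ with $\mathbbm{h}(\sigma u,\sigma v)=\mathbbm{h}(u,v)$ and $\mathbbm{f}(\sigma u,\sigma u)-\mathbbm{f}(u,u)\in\Lambda$ for all $u,v$. For an involution invariant ideal $J$ and additive subgroup $\Delta\subseteq J\cap\Lambda$ (e.g. $(I,\Gamma)$ or $(s_0R,s_0\Lambda)$), $U_{2n}((R,\Lambda),(J,\Delta))$ = all $\sigma\in U_{2n}(R,\Lambda)$ with $\sigma\equiv e\pmod J$ and $\mathbbm{f}(\sigma u,\sigma u)-\mathbbm{f}(u,u)\in\Delta$ for all $u$. Localization: $C$ is central and fixed by the involution. $S_m=C\setminus m$, $R_m=S_m^{-1}R$ (involution $\overline{r/s}=\bar r/s$), $\Lambda_m=S_m^{-1}\Lambda$, $I_m=S_m^{-1}I$, $\Gamma_m=S_m^{-1}\Gamma$; $F_m:U_{2n}(R,\Lambda)\to U_{2n}(R_m,\Lambda_m)$ applies the localization map entrywise; $\psi:U_{2n}(R,\Lambda)\to U_{2n}(R,\Lambda)/U_{2n}((R,\Lambda),(I,\Gamma))$ is the canonical map; $\phi_m:U_{2n}(R,\Lambda)/U_{2n}((R,\Lambda),(I,\Gamma))\to U_{2n}(R_m,\Lambda_m)/U_{2n}((R_m,\Lambda_m),(I_m,\Gamma_m))$ is induced by $F_m$. *)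

theory Defs
  imports "HOL-Algebra.Algebra"
begin

definition ring_center :: "('a, 'b) ring_scheme \<Rightarrow> 'a set" where
  "ring_center R = {c \<in> carrier R. \<forall>r \<in> carrier R. c \<otimes>\<^bsub>R\<^esub> r = r \<otimes>\<^bsub>R\<^esub> c}"

definition is_involution :: "('a, 'b) ring_scheme \<Rightarrow> ('a \<Rightarrow> 'a) \<Rightarrow> bool" where
  "is_involution R J \<longleftrightarrow>
     (\<forall>x \<in> carrier R. J x \<in> carrier R) \<and>
     (\<forall>x \<in> carrier R. \<forall>y \<in> carrier R. J (x \<oplus>\<^bsub>R\<^esub> y) = J x \<oplus>\<^bsub>R\<^esub> J y) \<and>
     (\<forall>x \<in> carrier R. \<forall>y \<in> carrier R. J (x \<otimes>\<^bsub>R\<^esub> y) = J y \<otimes>\<^bsub>R\<^esub> J x) \<and>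
     (\<forall>x \<in> carrier R. J (J x) = x)"

definition form_parameter :: "('a, 'b) ring_scheme \<Rightarrow> ('a \<Rightarrow> 'a) \<Rightarrow> 'a \<Rightarrow> 'a set \<Rightarrow> bool" where
  "form_parameter R J l Lam \<longleftrightarrow>
     additive_subgroup Lam R \<and>
     {r \<ominus>\<^bsub>R\<^esub> l \<otimes>\<^bsub>R\<^esub> J r | r. r \<in> carrier R} \<subseteq> Lam \<and>
     Lam \<subseteq> {r \<in> carrier R. r = \<ominus>\<^bsub>R\<^esub> (l \<otimes>\<^bsub>R\<^esub> J r)} \<and>
     (\<forall>r \<in> carrier R. \<forall>a \<in> Lam. r \<otimes>\<^bsub>R\<^esub> a \<otimes>\<^bsub>R\<^esub> J r \<in> Lam)"

definition form_ring :: "('a, 'b) ring_scheme \<Rightarrow> ('a \<Rightarrow> 'a) \<Rightarrow> 'a \<Rightarrow> 'a set \<Rightarrow> bool" where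
  "form_ring R J l Lam \<longleftrightarrow>
     ring R \<and> \<one>\<^bsub>R\<^esub> \<noteq> \<zero>\<^bsub>R\<^esub> \<and> is_involution R J \<and>
     l \<in> ring_center R \<and> l \<otimes>\<^bsub>R\<^esub> J l = \<one>\<^bsub>R\<^esub> \<and>
     form_parameter R J l Lam"

text \<open>Since \<open>\<Gamma>\<close> is an additive subgroup, containing the sum
  of the set of all \<open>\<xi> - l \<xi>bar\<close> and the subgroup generated by all \<open>\<zeta>\<alpha>\<zeta>bar\<close> means
  containing all these elements.\<close>
definition form_ideal ::
  "('a, 'b) ring_scheme \<Rightarrow> ('a \<Rightarrow> 'a) \<Rightarrow> 'a \<Rightarrow> 'a set \<Rightarrow> 'a set \<Rightarrow> 'a set \<Rightarrow> bool" where
  "form_ideal R J l Lam I Gam \<longleftrightarrow>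
     ideal I R \<and> J ` I = I \<and>
     additive_subgroup Gam R \<and>
     {\<xi> \<ominus>\<^bsub>R\<^esub> l \<otimes>\<^bsub>R\<^esub> J \<xi> | \<xi>. \<xi> \<in> I} \<subseteq> Gam \<and>
     {\<zeta> \<otimes>\<^bsub>R\<^esub> \<alpha> \<otimes>\<^bsub>R\<^esub> J \<zeta> | \<zeta> \<alpha>. \<zeta> \<in> I \<and> \<alpha> \<in> Lam} \<subseteq> Gam \<and>
     Gam \<subseteq> I \<inter> Lam \<and>
     (\<forall>\<alpha> \<in> carrier R. \<forall>g \<in> Gam. \<alpha> \<otimes>\<^bsub>R\<^esub> g \<otimes>\<^bsub>R\<^esub> J \<alpha> \<in> Gam)"

inductive_set norm_sums :: "('a, 'b) ring_scheme \<Rightarrow> ('a \<Rightarrow> 'a) \<Rightarrow> 'a set \<Rightarrow> 'a set"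
  for R J C' where
  zero: "\<zero>\<^bsub>R\<^esub> \<in> norm_sums R J C'"
| pos: "c \<in> C' \<Longrightarrow> x \<in> norm_sums R J C' \<Longrightarrow> (c \<otimes>\<^bsub>R\<^esub> J c) \<oplus>\<^bsub>R\<^esub> x \<in> norm_sums R J C'"
| neg: "c \<in> C' \<Longrightarrow> x \<in> norm_sums R J C' \<Longrightarrow> (\<ominus>\<^bsub>R\<^esub> (c \<otimes>\<^bsub>R\<^esub> J c)) \<oplus>\<^bsub>R\<^esub> x \<in> norm_sums R J C'"

definition noetherian_module :: "('a, 'b) ring_scheme \<Rightarrow> 'a set \<Rightarrow> bool" where
  "noetherian_module R C \<longleftrightarrow>
     (\<forall>M. additive_subgroup M R \<and> (\<forall>c \<in> C. \<forall>x \<in> M. c \<otimes>\<^bsub>R\<^esub> x \<in> M) \<longrightarrow>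
        (\<exists>F. finite F \<and> F \<subseteq> M \<and>
             M = {finsum R (\<lambda>f. a f \<otimes>\<^bsub>R\<^esub> f) F | a. a \<in> F \<rightarrow> C}))"

text \<open>Index set \<open>\<Omega> = {1..n} \<union> {-n..-1}\<close>; matrices are functions \<open>int \<Rightarrow> int \<Rightarrow> 'a\<close>
  that are zero outside \<open>\<Omega> \<times> \<Omega>\<close>; column vectors are functions \<open>int \<Rightarrow> 'a\<close>.\<close>
definition Omega :: "nat \<Rightarrow> int set" where
  "Omega n = {1..int n} \<union> {- int n..-1}"

definition mat_carrier :: "('a, 'b) ring_scheme \<Rightarrow> nat \<Rightarrow> (int \<Rightarrow> int \<Rightarrow> 'a) set" where
  "mat_carrier R n = {\<sigma>. (\<forall>i \<in> Omega n. \<forall>j \<in> Omega n. \<sigma> i j \<in> carrier R) \<and>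
                         (\<forall>i j. i \<notin> Omega n \<or> j \<notin> Omega n \<longrightarrow> \<sigma> i j = \<zero>\<^bsub>R\<^esub>)}"

definition mat_mult :: "('a, 'b) ring_scheme \<Rightarrow> nat \<Rightarrow> (int \<Rightarrow> int \<Rightarrow> 'a) \<Rightarrow> (int \<Rightarrow> int \<Rightarrow> 'a) \<Rightarrow> (int \<Rightarrow> int \<Rightarrow> 'a)" where
  "mat_mult R n \<sigma> \<tau> = (\<lambda>i j. if i \<in> Omega n \<and> j \<in> Omega n
      then finsum R (\<lambda>k. \<sigma> i k \<otimes>\<^bsub>R\<^esub> \<tau> k j) (Omega n) else \<zero>\<^bsub>R\<^esub>)"

definition mat_one :: "('a, 'b) ring_scheme \<Rightarrow> nat \<Rightarrow> (int \<Rightarrow> int \<Rightarrow> 'a)" where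
  "mat_one R n = (\<lambda>i j. if i \<in> Omega n \<and> j \<in> Omega n \<and> i = j then \<one>\<^bsub>R\<^esub> else \<zero>\<^bsub>R\<^esub>)"

definition GL :: "('a, 'b) ring_scheme \<Rightarrow> nat \<Rightarrow> (int \<Rightarrow> int \<Rightarrow> 'a) set" where
  "GL R n = {\<sigma> \<in> mat_carrier R n. \<exists>\<tau> \<in> mat_carrier R n.
               mat_mult R n \<sigma> \<tau> = mat_one R n \<and> mat_mult R n \<tau> \<sigma> = mat_one R n}"

definition vec_carrier :: "('a, 'b) ring_scheme \<Rightarrow> nat \<Rightarrow> (int \<Rightarrow> 'a) set" where
  "vec_carrier R n = {u. \<forall>i \<in> Omega n. u i \<in> carrier R}"

definition mat_vec :: "('a, 'b) ring_scheme \<Rightarrow> nat \<Rightarrow> (int \<Rightarrow> int \<Rightarrow> 'a) \<Rightarrow> (int \<Rightarrow> 'a) \<Rightarrow> (int \<Rightarrow> 'a)" where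
  "mat_vec R n \<sigma> u = (\<lambda>i. finsum R (\<lambda>k. \<sigma> i k \<otimes>\<^bsub>R\<^esub> u k) (Omega n))"

definition form_f :: "('a, 'b) ring_scheme \<Rightarrow> ('a \<Rightarrow> 'a) \<Rightarrow> nat \<Rightarrow> (int \<Rightarrow> 'a) \<Rightarrow> (int \<Rightarrow> 'a) \<Rightarrow> 'a" where
  "form_f R J n u v = finsum R (\<lambda>i. J (u i) \<otimes>\<^bsub>R\<^esub> v (-i)) {1..int n}"

definition form_h :: "('a, 'b) ring_scheme \<Rightarrow> ('a \<Rightarrow> 'a) \<Rightarrow> 'a \<Rightarrow> nat \<Rightarrow> (int \<Rightarrow> 'a) \<Rightarrow> (int \<Rightarrow> 'a) \<Rightarrow> 'a" where
  "form_h R J l n u v = finsum R (\<lambda>i. J (u i) \<otimes>\<^bsub>R\<^esub> v (-i) \<oplus>\<^bsub>R\<^esub> l \<otimes>\<^bsub>R\<^esub> J (u (-i)) \<otimes>\<^bsub>R\<^esub> v i) {1..int n}"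

definition U2n :: "('a, 'b) ring_scheme \<Rightarrow> ('a \<Rightarrow> 'a) \<Rightarrow> 'a \<Rightarrow> 'a set \<Rightarrow> nat \<Rightarrow> (int \<Rightarrow> int \<Rightarrow> 'a) set" where
  "U2n R J l Lam n = {\<sigma> \<in> GL R n. \<forall>u \<in> vec_carrier R n. \<forall>v \<in> vec_carrier R n.
      form_h R J l n (mat_vec R n \<sigma> u) (mat_vec R n \<sigma> v) = form_h R J l n u v \<and>
      form_f R J n (mat_vec R n \<sigma> u) (mat_vec R n \<sigma> u) \<ominus>\<^bsub>R\<^esub> form_f R J n u u \<in> Lam}"

definition U2n_rel :: "('a, 'b) ring_scheme \<Rightarrow> ('a \<Rightarrow> 'a) \<Rightarrow> 'a \<Rightarrow> 'a set \<Rightarrow> nat \<Rightarrow> 'a set \<Rightarrow> 'a set \<Rightarrow> (int \<Rightarrow> int \<Rightarrow> 'a) set" where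
  "U2n_rel R J l Lam n K Del = {\<sigma> \<in> U2n R J l Lam n.
      (\<forall>i \<in> Omega n. \<forall>j \<in> Omega n. \<sigma> i j \<ominus>\<^bsub>R\<^esub> mat_one R n i j \<in> K) \<and>
      (\<forall>u \<in> vec_carrier R n.
         form_f R J n (mat_vec R n \<sigma> u) (mat_vec R n \<sigma> u) \<ominus>\<^bsub>R\<^esub> form_f R J n u u \<in> Del)}"

definition U2n_group :: "('a, 'b) ring_scheme \<Rightarrow> ('a \<Rightarrow> 'a) \<Rightarrow> 'a \<Rightarrow> 'a set \<Rightarrow> nat \<Rightarrow> (int \<Rightarrow> int \<Rightarrow> 'a) monoid" where
  "U2n_group R J l Lam n = \<lparr>carrier = U2n R J l Lam n, monoid.mult = mat_mult R n, monoid.one = mat_one R n\<rparr>"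

definition loc_rel :: "('a, 'b) ring_scheme \<Rightarrow> 'a set \<Rightarrow> (('a \<times> 'a) \<times> ('a \<times> 'a)) set" where
  "loc_rel R S = {((r, s), (r', s')). r \<in> carrier R \<and> s \<in> S \<and> r' \<in> carrier R \<and> s' \<in> S \<and>
      (\<exists>u \<in> S. u \<otimes>\<^bsub>R\<^esub> (s' \<otimes>\<^bsub>R\<^esub> r \<ominus>\<^bsub>R\<^esub> s \<otimes>\<^bsub>R\<^esub> r') = \<zero>\<^bsub>R\<^esub>)}"

definition frac :: "('a, 'b) ring_scheme \<Rightarrow> 'a set \<Rightarrow> 'a \<Rightarrow> 'a \<Rightarrow> ('a \<times> 'a) set" where
  "frac R S r s = loc_rel R S `` {(r, s)}"

definition loc_mult :: "('a, 'b) ring_scheme \<Rightarrow> 'a set \<Rightarrow> ('a \<times> 'a) set \<Rightarrow> ('a \<times> 'a) set \<Rightarrow> ('a \<times> 'a) set" where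
  "loc_mult R S A B = Union ((\<lambda>(p, q). frac R S (fst p \<otimes>\<^bsub>R\<^esub> fst q) (snd p \<otimes>\<^bsub>R\<^esub> snd q)) ` (A \<times> B))"

definition loc_add :: "('a, 'b) ring_scheme \<Rightarrow> 'a set \<Rightarrow> ('a \<times> 'a) set \<Rightarrow> ('a \<times> 'a) set \<Rightarrow> ('a \<times> 'a) set" where
  "loc_add R S A B = Union ((\<lambda>(p, q). frac R S (fst p \<otimes>\<^bsub>R\<^esub> snd q \<oplus>\<^bsub>R\<^esub> fst q \<otimes>\<^bsub>R\<^esub> snd p) (snd p \<otimes>\<^bsub>R\<^esub> snd q)) ` (A \<times> B))"

definition loc_ring :: "('a, 'b) ring_scheme \<Rightarrow> 'a set \<Rightarrow> ('a \<times> 'a) set ring" where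
  "loc_ring R S = \<lparr>carrier = (carrier R \<times> S) // loc_rel R S,
     monoid.mult = loc_mult R S,
     monoid.one = frac R S \<one>\<^bsub>R\<^esub> \<one>\<^bsub>R\<^esub>,
     ring.zero = frac R S \<zero>\<^bsub>R\<^esub> \<one>\<^bsub>R\<^esub>,
     ring.add = loc_add R S\<rparr>"

definition loc_inv :: "('a, 'b) ring_scheme \<Rightarrow> 'a set \<Rightarrow> ('a \<Rightarrow> 'a) \<Rightarrow> ('a \<times> 'a) set \<Rightarrow> ('a \<times> 'a) set" where
  "loc_inv R S J A = Union ((\<lambda>p. frac R S (J (fst p)) (snd p)) ` A)"

definition loc_set :: "('a, 'b) ring_scheme \<Rightarrow> 'a set \<Rightarrow> 'a set \<Rightarrow> ('a \<times> 'a) set set" where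
  "loc_set R S A = {frac R S a s | a s. a \<in> A \<and> s \<in> S}"

definition loc_mat :: "('a, 'b) ring_scheme \<Rightarrow> 'a set \<Rightarrow> nat \<Rightarrow> (int \<Rightarrow> int \<Rightarrow> 'a) \<Rightarrow> (int \<Rightarrow> int \<Rightarrow> ('a \<times> 'a) set)" where
  "loc_mat R S n \<sigma> = (\<lambda>i j. if i \<in> Omega n \<and> j \<in> Omega n then frac R S (\<sigma> i j) \<one>\<^bsub>R\<^esub>
                              else frac R S \<zero>\<^bsub>R\<^esub> \<one>\<^bsub>R\<^esub>)"

definition psi_map :: "('a, 'b) ring_scheme \<Rightarrow> ('a \<Rightarrow> 'a) \<Rightarrow> 'a \<Rightarrow> 'a set \<Rightarrow> nat \<Rightarrow> 'a set \<Rightarrow> 'a set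
     \<Rightarrow> (int \<Rightarrow> int \<Rightarrow> 'a) \<Rightarrow> (int \<Rightarrow> int \<Rightarrow> 'a) set" where
  "psi_map R J l Lam n I Gam \<sigma> = U2n_rel R J l Lam n I Gam #>\<^bsub>U2n_group R J l Lam n\<^esub> \<sigma>"

text \<open>\<open>\<phi>_m\<close>: the map of quotients induced by \<open>F_m\<close>, sending the coset of \<open>\<sigma>\<close> to the coset
  of \<open>F_m(\<sigma>)\<close>, with respect to the localized data \<open>(R_m,\<Lambda>_m)\<close>, \<open>(I_m,\<Gamma>_m)\<close>.\<close>
definition phi_map :: "('a, 'b) ring_scheme \<Rightarrow> ('a \<Rightarrow> 'a) \<Rightarrow> 'a \<Rightarrow> 'a set \<Rightarrow> nat \<Rightarrow> 'a set \<Rightarrow> 'a set \<Rightarrow> 'a set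
     \<Rightarrow> (int \<Rightarrow> int \<Rightarrow> 'a) set \<Rightarrow> (int \<Rightarrow> int \<Rightarrow> ('a \<times> 'a) set) set" where
  "phi_map R J l Lam n I Gam S A =
     Union ((\<lambda>\<sigma>. U2n_rel (loc_ring R S) (loc_inv R S J) (frac R S l \<one>\<^bsub>R\<^esub>) (loc_set R S Lam) n
                  (loc_set R S I) (loc_set R S Gam)
              #>\<^bsub>U2n_group (loc_ring R S) (loc_inv R S J) (frac R S l \<one>\<^bsub>R\<^esub>) (loc_set R S Lam) n\<^esub>
                loc_mat R S n \<sigma>) ` A)"

end

theory Submission
  imports Defs
begin

text \<open>
  For (1) and (2): the \<open>S\<^sub>m\<close>-saturation of \<open>I\<close>, i.e. the set of \<open>x\<close> with \<open>t x \<in> I\<close> for some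
  \<open>t \<in> S\<^sub>m\<close>, is a \<open>C\<close>-submodule of the Noetherian \<open>C\<close>-module \<open>R\<close>. It is therefore finitely
  generated, so one \<open>s\<^sub>1 \<in> S\<^sub>m\<close> multiplies all of it into \<open>I\<close>; likewise some \<open>s\<^sub>2\<close> for \<open>\<Gamma>\<close>,
  and \<open>s\<^sub>0 = s\<^sub>1 s\<^sub>2\<close> works.

  For injectivity: if \<open>\<phi>\<^sub>m\<close> identifies the cosets of \<open>\<sigma>\<close> and \<open>\<tau>\<close>, then \<open>F\<^sub>m(\<sigma> \<rho>\<^sup>-\<^sup>1)\<close> lies in
  the localized relative group for some \<open>\<rho>\<close> in the coset of \<open>\<tau>\<close>. As an element of \<open>R\<close> becomes
  zero, or falls into \<open>I\<^sub>m\<close> resp. \<open>\<Gamma>\<^sub>m\<close>, after localization exactly when it does so after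
  multiplication by some \<open>t \<in> S\<^sub>m\<close>, \<open>\<sigma> \<tau>\<^sup>-\<^sup>1\<close> is congruent to 1 modulo the saturations of
  \<open>I\<close> and \<open>\<Gamma>\<close>. For \<open>\<sigma>, \<tau>\<close> in \<open>U\<^sub>2\<^sub>n((R,\<Lambda>),(s\<^sub>0R,s\<^sub>0\<Lambda>))\<close> it is also congruent to 1
  modulo \<open>s\<^sub>0R\<close> and \<open>s\<^sub>0\<Lambda>\<close>, so by (1) and (2) it lies in \<open>U\<^sub>2\<^sub>n((R,\<Lambda>),(I,\<Gamma>))\<close>.
\<close>

lemma Omega_finite [simp]: "finite (Omega n)"
  by (simp add: Omega_def)

lemma Omega_pos: "i \<in> {1..int n} \<Longrightarrow> i \<in> Omega n"
  and Omega_neg: "i \<in> {1..int n} \<Longrightarrow> - i \<in> Omega n"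
  by (auto simp: Omega_def)

context ring
begin

lemma finsum_swap:
  assumes "finite A" "finite B" "\<And>i j. i \<in> A \<Longrightarrow> j \<in> B \<Longrightarrow> f i j \<in> carrier R"
  shows "(\<Oplus>i\<in>A. \<Oplus>j\<in>B. f i j) = (\<Oplus>j\<in>B. \<Oplus>i\<in>A. f i j)"
  using assms
proof (induction A rule: finite_induct)
  case empty
  then show ?case by (simp add: finsum_zero)
next
  case (insert a A)
  have "(\<Oplus>i\<in>insert a A. \<Oplus>j\<in>B. f i j) = (\<Oplus>j\<in>B. f a j) \<oplus> (\<Oplus>j\<in>B. \<Oplus>i\<in>A. f i j)"
    using insert by (simp add: finsum_insert Pi_def)
  also have "\<dots> = (\<Oplus>j\<in>B. f a j \<oplus> (\<Oplus>i\<in>A. f i j))"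
    using insert by (intro finsum_addf[symmetric]) (auto intro!: finsum_closed)
  also have "\<dots> = (\<Oplus>j\<in>B. \<Oplus>i\<in>insert a A. f i j)"
    using insert by (intro finsum_cong') (auto simp: finsum_insert)
  finally show ?case .
qed

lemma finsum_mem_additive_subgroup:
  assumes A: "additive_subgroup A R" and "finite F" and "\<And>k. k \<in> F \<Longrightarrow> f k \<in> A"
  shows "finsum R f F \<in> A"
  using assms(2,3)
proof (induction F rule: finite_induct)
  case empty
  then show ?case using A by (simp add: additive_subgroup.zero_closed)
next
  case (insert a F)
  then have "f \<in> insert a F \<rightarrow> carrier R"
    using additive_subgroup.a_subset[OF A] by blast
  then show ?case
    using insert A by (simp add: finsum_insert additive_subgroup.a_closed)
qed

lemma finsum_diff_mem_additive_subgroup: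
  assumes A: "additive_subgroup A R" and "finite F"
    and "\<And>k. k \<in> F \<Longrightarrow> f k \<in> carrier R" "\<And>k. k \<in> F \<Longrightarrow> g k \<in> carrier R"
    and "\<And>k. k \<in> F \<Longrightarrow> f k \<ominus> g k \<in> A"
  shows "finsum R f F \<ominus> finsum R g F \<in> A"
  using assms(2-)
proof (induction F rule: finite_induct)
  case empty
  then show ?case using A by (simp add: a_minus_def additive_subgroup.zero_closed)
next
  case (insert a F)
  have "(f a \<oplus> finsum R f F) \<ominus> (g a \<oplus> finsum R g F) = (f a \<ominus> g a) \<oplus> (finsum R f F \<ominus> finsum R g F)"
    using insert.prems by (simp add: a_minus_def minus_add a_ac finsum_closed Pi_def)
  then show ?case
    using insert A by (simp add: finsum_insert Pi_def additive_subgroup.a_closed)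
qed

lemma diff_eq_zero_iff: "a \<in> carrier R \<Longrightarrow> b \<in> carrier R \<Longrightarrow> a \<ominus> b = \<zero> \<longleftrightarrow> a = b"
  by (metis a_minus_def add.inv_closed add.r_cancel r_neg)

lemma diff_mem_additive_subgroup_trans:
  assumes "additive_subgroup A R" "a \<in> carrier R" "b \<in> carrier R" "c \<in> carrier R"
    and "a \<ominus> b \<in> A" "b \<ominus> c \<in> A"
  shows "a \<ominus> c \<in> A"
proof -
  have "a \<ominus> c = (a \<ominus> b) \<oplus> (b \<ominus> c)"
    using assms(2-4) by (simp add: a_minus_def a_assoc r_neg1)
  then show ?thesis using assms by (simp add: additive_subgroup.a_closed)
qed

lemma diff_mem_additive_subgroup_sym:
  assumes "additive_subgroup A R" "a \<in> carrier R" "b \<in> carrier R" "a \<ominus> b \<in> A"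
  shows "b \<ominus> a \<in> A"
proof -
  have "b \<ominus> a = \<ominus> (a \<ominus> b)"
    using assms(2,3) by (simp add: a_minus_def minus_add a_comm)
  then show ?thesis using assms by (simp add: additive_subgroup.a_inv_closed)
qed

lemma additive_subgroup_closedI:
  assumes "A \<subseteq> carrier R" "\<zero> \<in> A" "\<And>x y. x \<in> A \<Longrightarrow> y \<in> A \<Longrightarrow> x \<oplus> y \<in> A"
    "\<And>x. x \<in> A \<Longrightarrow> \<ominus> x \<in> A"
  shows "additive_subgroup A R"
  using assms unfolding additive_subgroup_def subgroup_def by (auto simp: a_inv_def[symmetric])

lemma additive_subgroup_left_multiples:
  assumes A: "additive_subgroup A R" and s: "s \<in> carrier R"
  shows "additive_subgroup {s \<otimes> a | a. a \<in> A} R"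
proof (rule additive_subgroup_closedI)
  have Ac: "A \<subseteq> carrier R" using additive_subgroup.a_subset[OF A] .
  then show "{s \<otimes> a |a. a \<in> A} \<subseteq> carrier R" using s by auto
  show "\<zero> \<in> {s \<otimes> a |a. a \<in> A}"
    using s A by (auto intro!: exI[of _ \<zero>] simp: additive_subgroup.zero_closed)
  fix x y assume "x \<in> {s \<otimes> a |a. a \<in> A}" "y \<in> {s \<otimes> a |a. a \<in> A}"
  then obtain a b where ab: "x = s \<otimes> a" "y = s \<otimes> b" "a \<in> A" "b \<in> A" by blast
  then show "x \<oplus> y \<in> {s \<otimes> a |a. a \<in> A}"
    using Ac s A by (auto intro!: exI[of _ "a \<oplus> b"] simp: r_distr additive_subgroup.a_closed subsetD)
  show "\<ominus> x \<in> {s \<otimes> a |a. a \<in> A}"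
    using ab Ac s A by (auto intro!: exI[of _ "\<ominus> a"] simp: r_minus additive_subgroup.a_inv_closed subsetD)
qed

lemma ring_center_closed: "x \<in> ring_center R \<Longrightarrow> x \<in> carrier R"
  unfolding ring_center_def by blast

lemma ring_center_add: "x \<in> ring_center R \<Longrightarrow> y \<in> ring_center R \<Longrightarrow> x \<oplus> y \<in> ring_center R"
  and ring_center_minus: "x \<in> ring_center R \<Longrightarrow> \<ominus> x \<in> ring_center R"
  unfolding ring_center_def by (simp_all add: l_distr r_distr l_minus r_minus)

lemma ring_center_mult:
  assumes x: "x \<in> ring_center R" and y: "y \<in> ring_center R"
  shows "x \<otimes> y \<in> ring_center R"
  unfolding ring_center_def
proof (intro CollectI conjI ballI)
  have xy: "x \<in> carrier R" "y \<in> carrier R" using x y by (simp_all add: ring_center_closed)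
  then show "x \<otimes> y \<in> carrier R" by simp
  fix r assume r: "r \<in> carrier R"
  have xr: "x \<otimes> r = r \<otimes> x" and yr: "y \<otimes> r = r \<otimes> y"
    using x y r unfolding ring_center_def by auto
  have "x \<otimes> y \<otimes> r = x \<otimes> (r \<otimes> y)" using xy r yr by (simp add: m_assoc)
  also have "\<dots> = r \<otimes> (x \<otimes> y)" using xy r xr by (simp add: m_assoc[symmetric])
  finally show "x \<otimes> y \<otimes> r = r \<otimes> (x \<otimes> y)" .
qed

end

section \<open>Matrices indexed by \<open>\<Omega>\<close>\<close>

context ring
begin

lemma mat_carrier_closed [simp]: "M \<in> mat_carrier R n \<Longrightarrow> M i j \<in> carrier R"
  by (cases "i \<in> Omega n \<and> j \<in> Omega n") (auto simp: mat_carrier_def)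

lemma mat_carrier_outside: "M \<in> mat_carrier R n \<Longrightarrow> i \<notin> Omega n \<or> j \<notin> Omega n \<Longrightarrow> M i j = \<zero>"
  by (auto simp: mat_carrier_def)

lemma mat_one_closed_entry [simp]: "mat_one R n i j \<in> carrier R"
  by (simp add: mat_one_def)

lemma mat_mult_entry:
  "i \<in> Omega n \<Longrightarrow> j \<in> Omega n \<Longrightarrow> mat_mult R n M N i j = (\<Oplus>k\<in>Omega n. M i k \<otimes> N k j)"
  by (simp add: mat_mult_def)

lemma mat_mult_closed: "M \<in> mat_carrier R n \<Longrightarrow> N \<in> mat_carrier R n \<Longrightarrow> mat_mult R n M N \<in> mat_carrier R n"
  unfolding mat_mult_def mat_carrier_def by (auto intro!: finsum_closed)

lemma mat_one_closed: "mat_one R n \<in> mat_carrier R n"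
  unfolding mat_one_def mat_carrier_def by auto

lemma finsum_mat_one_left:
  assumes "i \<in> Omega n" "\<And>k. k \<in> Omega n \<Longrightarrow> f k \<in> carrier R"
  shows "(\<Oplus>k\<in>Omega n. mat_one R n i k \<otimes> f k) = f i"
proof -
  have "(\<Oplus>k\<in>Omega n. mat_one R n i k \<otimes> f k) = (\<Oplus>k\<in>Omega n. if i = k then f k else \<zero>)"
    using assms by (intro finsum_cong') (auto simp: mat_one_def)
  also have "\<dots> = f i" using assms by (intro finsum_singleton) auto
  finally show ?thesis .
qed

lemma finsum_mat_one_right:
  assumes "j \<in> Omega n" "\<And>k. k \<in> Omega n \<Longrightarrow> f k \<in> carrier R"
  shows "(\<Oplus>k\<in>Omega n. f k \<otimes> mat_one R n k j) = f j"
proof -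
  have "(\<Oplus>k\<in>Omega n. f k \<otimes> mat_one R n k j) = (\<Oplus>k\<in>Omega n. if j = k then f k else \<zero>)"
    using assms by (intro finsum_cong') (auto simp: mat_one_def)
  also have "\<dots> = f j" using assms by (intro finsum_singleton) auto
  finally show ?thesis .
qed

lemma mat_mult_one_left: "M \<in> mat_carrier R n \<Longrightarrow> mat_mult R n (mat_one R n) M = M"
  by (intro ext) (auto simp: mat_mult_def finsum_mat_one_left mat_carrier_outside)

lemma mat_mult_one_right: "M \<in> mat_carrier R n \<Longrightarrow> mat_mult R n M (mat_one R n) = M"
  by (intro ext) (auto simp: mat_mult_def finsum_mat_one_right mat_carrier_outside)

lemma finsum_rdistr_assoc:
  "a \<in> carrier R \<Longrightarrow> finite A \<Longrightarrow> f \<in> A \<rightarrow> carrier R \<Longrightarrow> g \<in> A \<rightarrow> carrier R \<Longrightarrow>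
    a \<otimes> (\<Oplus>k\<in>A. f k \<otimes> g k) = (\<Oplus>k\<in>A. a \<otimes> f k \<otimes> g k)"
  by (subst finsum_rdistr) (auto intro!: finsum_cong' simp: m_assoc Pi_def)

lemma mat_mult_assoc:
  assumes "M \<in> mat_carrier R n" "N \<in> mat_carrier R n" "P \<in> mat_carrier R n"
  shows "mat_mult R n (mat_mult R n M N) P = mat_mult R n M (mat_mult R n N P)"
proof (intro ext)
  fix i j
  show "mat_mult R n (mat_mult R n M N) P i j = mat_mult R n M (mat_mult R n N P) i j"
  proof (cases "i \<in> Omega n \<and> j \<in> Omega n")
    case True
    have "(\<Oplus>k\<in>Omega n. mat_mult R n M N i k \<otimes> P k j)
        = (\<Oplus>k\<in>Omega n. \<Oplus>l\<in>Omega n. M i l \<otimes> N l k \<otimes> P k j)"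
      using True assms by (intro finsum_cong') (auto simp: mat_mult_def finsum_ldistr)
    also have "\<dots> = (\<Oplus>l\<in>Omega n. \<Oplus>k\<in>Omega n. M i l \<otimes> N l k \<otimes> P k j)"
      using assms by (intro finsum_swap) auto
    also have "\<dots> = (\<Oplus>l\<in>Omega n. M i l \<otimes> mat_mult R n N P l j)"
      using True assms unfolding mat_mult_def
      by (intro finsum_cong') (auto simp: finsum_rdistr_assoc intro!: finsum_closed)
    finally show ?thesis using True by (simp add: mat_mult_def)
  qed (auto simp: mat_mult_def)
qed

lemma vec_carrier_closed: "u \<in> vec_carrier R n \<Longrightarrow> i \<in> Omega n \<Longrightarrow> u i \<in> carrier R"
  by (simp add: vec_carrier_def)

lemma mat_vec_closed:
  "M \<in> mat_carrier R n \<Longrightarrow> u \<in> vec_carrier R n \<Longrightarrow> mat_vec R n M u \<in> vec_carrier R n"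
  unfolding mat_vec_def vec_carrier_def by (auto intro!: finsum_closed)

lemma mat_vec_mult:
  assumes "M \<in> mat_carrier R n" "N \<in> mat_carrier R n" "u \<in> vec_carrier R n" "i \<in> Omega n"
  shows "mat_vec R n (mat_mult R n M N) u i = mat_vec R n M (mat_vec R n N u) i"
proof -
  have "(\<Oplus>k\<in>Omega n. mat_mult R n M N i k \<otimes> u k)
      = (\<Oplus>k\<in>Omega n. \<Oplus>l\<in>Omega n. M i l \<otimes> N l k \<otimes> u k)"
    using assms by (intro finsum_cong') (auto simp: mat_mult_def finsum_ldistr vec_carrier_closed)
  also have "\<dots> = (\<Oplus>l\<in>Omega n. \<Oplus>k\<in>Omega n. M i l \<otimes> N l k \<otimes> u k)"
    using assms by (intro finsum_swap) (auto simp: vec_carrier_closed)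
  also have "\<dots> = (\<Oplus>l\<in>Omega n. M i l \<otimes> mat_vec R n N u l)"
    using assms unfolding mat_vec_def
    by (intro finsum_cong') (auto simp: vec_carrier_closed finsum_rdistr_assoc intro!: finsum_closed)
  finally show ?thesis by (simp add: mat_vec_def)
qed

lemma mat_vec_one: "u \<in> vec_carrier R n \<Longrightarrow> i \<in> Omega n \<Longrightarrow> mat_vec R n (mat_one R n) u i = u i"
  unfolding mat_vec_def by (simp add: finsum_mat_one_left vec_carrier_closed)

end

section \<open>The hyperbolic unitary group and its relative subgroups\<close>

definition mat_congruent_one :: "('a, 'b) ring_scheme \<Rightarrow> nat \<Rightarrow> 'a set \<Rightarrow> (int \<Rightarrow> int \<Rightarrow> 'a) \<Rightarrow> bool" where
  "mat_congruent_one R n K M \<longleftrightarrow> (\<forall>i \<in> Omega n. \<forall>j \<in> Omega n. M i j \<ominus>\<^bsub>R\<^esub> mat_one R n i j \<in> K)"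

definition preserves_form_h ::
  "('a, 'b) ring_scheme \<Rightarrow> ('a \<Rightarrow> 'a) \<Rightarrow> 'a \<Rightarrow> nat \<Rightarrow> (int \<Rightarrow> int \<Rightarrow> 'a) \<Rightarrow> bool" where
  "preserves_form_h R J l n M \<longleftrightarrow> (\<forall>u \<in> vec_carrier R n. \<forall>v \<in> vec_carrier R n.
     form_h R J l n (mat_vec R n M u) (mat_vec R n M v) = form_h R J l n u v)"

definition preserves_form_f_mod ::
  "('a, 'b) ring_scheme \<Rightarrow> ('a \<Rightarrow> 'a) \<Rightarrow> nat \<Rightarrow> 'a set \<Rightarrow> (int \<Rightarrow> int \<Rightarrow> 'a) \<Rightarrow> bool" where
  "preserves_form_f_mod R J n D M \<longleftrightarrow> (\<forall>u \<in> vec_carrier R n.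
     form_f R J n (mat_vec R n M u) (mat_vec R n M u) \<ominus>\<^bsub>R\<^esub> form_f R J n u u \<in> D)"

lemma U2n_iff:
  "M \<in> U2n R J l Lam n \<longleftrightarrow>
     M \<in> GL R n \<and> preserves_form_h R J l n M \<and> preserves_form_f_mod R J n Lam M"
  by (auto simp: U2n_def preserves_form_h_def preserves_form_f_mod_def)

lemma U2n_rel_iff:
  "M \<in> U2n_rel R J l Lam n K Del \<longleftrightarrow>
     M \<in> U2n R J l Lam n \<and> mat_congruent_one R n K M \<and> preserves_form_f_mod R J n Del M"
  by (auto simp: U2n_rel_def mat_congruent_one_def preserves_form_f_mod_def)

context ring
begin

lemma GL_mat_one: "mat_one R n \<in> GL R n"
  unfolding GL_def using mat_one_closed mat_mult_one_left[OF mat_one_closed] by blast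

lemma GL_mult:
  assumes "M \<in> GL R n" "N \<in> GL R n"
  shows "mat_mult R n M N \<in> GL R n"
proof -
  obtain M' N' where M: "M \<in> mat_carrier R n" "M' \<in> mat_carrier R n"
      "mat_mult R n M M' = mat_one R n" "mat_mult R n M' M = mat_one R n"
    and N: "N \<in> mat_carrier R n" "N' \<in> mat_carrier R n"
      "mat_mult R n N N' = mat_one R n" "mat_mult R n N' N = mat_one R n"
    using assms unfolding GL_def by blast
  have "mat_mult R n N (mat_mult R n N' M') = M'"
    using M N by (simp add: mat_mult_assoc[symmetric] mat_mult_one_left)
  then have 1: "mat_mult R n (mat_mult R n M N) (mat_mult R n N' M') = mat_one R n"
    using M N by (simp add: mat_mult_assoc mat_mult_closed)
  have "mat_mult R n M' (mat_mult R n M N) = N"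
    using M N by (simp add: mat_mult_assoc[symmetric] mat_mult_one_left)
  then have 2: "mat_mult R n (mat_mult R n N' M') (mat_mult R n M N) = mat_one R n"
    using M N by (simp add: mat_mult_assoc mat_mult_closed)
  show ?thesis
    unfolding GL_def using M N 1 2 by (auto intro!: mat_mult_closed)
qed

lemma form_f_cong:
  "(\<And>x. x \<in> carrier R \<Longrightarrow> J x \<in> carrier R) \<Longrightarrow> u' \<in> vec_carrier R n \<Longrightarrow> v' \<in> vec_carrier R n \<Longrightarrow>
    (\<And>i. i \<in> Omega n \<Longrightarrow> u i = u' i) \<Longrightarrow> (\<And>i. i \<in> Omega n \<Longrightarrow> v i = v' i) \<Longrightarrow>
    form_f R J n u v = form_f R J n u' v'"
  unfolding form_f_def by (intro finsum_cong') (auto simp: Omega_pos Omega_neg vec_carrier_closed)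

lemma form_h_cong:
  "(\<And>x. x \<in> carrier R \<Longrightarrow> J x \<in> carrier R) \<Longrightarrow> l \<in> carrier R \<Longrightarrow>
    u' \<in> vec_carrier R n \<Longrightarrow> v' \<in> vec_carrier R n \<Longrightarrow> (\<And>i. i \<in> Omega n \<Longrightarrow> u i = u' i) \<Longrightarrow> (\<And>i. i \<in> Omega n \<Longrightarrow> v i = v' i) \<Longrightarrow>
    form_h R J l n u v = form_h R J l n u' v'"
  unfolding form_h_def by (intro finsum_cong') (auto simp: Omega_pos Omega_neg vec_carrier_closed)

lemma form_f_closed:
  "(\<And>x. x \<in> carrier R \<Longrightarrow> J x \<in> carrier R) \<Longrightarrow> u \<in> vec_carrier R n \<Longrightarrow> v \<in> vec_carrier R n \<Longrightarrow>
    form_f R J n u v \<in> carrier R"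
  unfolding form_f_def by (intro finsum_closed) (auto simp: Omega_pos Omega_neg vec_carrier_closed)

lemma mat_vec_inverse:
  assumes "M \<in> mat_carrier R n" "N \<in> mat_carrier R n" "mat_mult R n M N = mat_one R n"
    and "u \<in> vec_carrier R n" "i \<in> Omega n"
  shows "mat_vec R n M (mat_vec R n N u) i = u i"
  using assms by (simp add: mat_vec_mult[symmetric] mat_vec_one)

lemma preserves_form_h_one:
  assumes J: "\<And>x. x \<in> carrier R \<Longrightarrow> J x \<in> carrier R" and l: "l \<in> carrier R"
  shows "preserves_form_h R J l n (mat_one R n)"
  unfolding preserves_form_h_def
proof (intro ballI)
  fix u v assume u: "u \<in> vec_carrier R n" and v: "v \<in> vec_carrier R n"
  show "form_h R J l n (mat_vec R n (mat_one R n) u) (mat_vec R n (mat_one R n) v) = form_h R J l n u v"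
    by (rule form_h_cong[OF J l u v]) (simp_all add: mat_vec_one u v)
qed

lemma preserves_form_h_mult:
  assumes J: "\<And>x. x \<in> carrier R \<Longrightarrow> J x \<in> carrier R" and l: "l \<in> carrier R"
    and M: "M \<in> mat_carrier R n" "preserves_form_h R J l n M"
    and N: "N \<in> mat_carrier R n" "preserves_form_h R J l n N"
  shows "preserves_form_h R J l n (mat_mult R n M N)"
  unfolding preserves_form_h_def
proof (intro ballI)
  fix u v assume u: "u \<in> vec_carrier R n" and v: "v \<in> vec_carrier R n"
  have Nu: "mat_vec R n N u \<in> vec_carrier R n" and Nv: "mat_vec R n N v \<in> vec_carrier R n"
    using N u v by (simp_all add: mat_vec_closed)
  have "form_h R J l n (mat_vec R n (mat_mult R n M N) u) (mat_vec R n (mat_mult R n M N) v)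
      = form_h R J l n (mat_vec R n M (mat_vec R n N u)) (mat_vec R n M (mat_vec R n N v))"
    by (rule form_h_cong[OF J l mat_vec_closed[OF M(1) Nu] mat_vec_closed[OF M(1) Nv]])
      (simp_all add: mat_vec_mult M N u v)
  also have "\<dots> = form_h R J l n u v"
    using M N u v Nu Nv by (simp add: preserves_form_h_def)
  finally show "form_h R J l n (mat_vec R n (mat_mult R n M N) u) (mat_vec R n (mat_mult R n M N) v)
      = form_h R J l n u v" .
qed

lemma preserves_form_h_inverse:
  assumes J: "\<And>x. x \<in> carrier R \<Longrightarrow> J x \<in> carrier R" and l: "l \<in> carrier R"
    and M: "M \<in> mat_carrier R n" "preserves_form_h R J l n M"
    and N: "N \<in> mat_carrier R n" "mat_mult R n M N = mat_one R n"
  shows "preserves_form_h R J l n N"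
  unfolding preserves_form_h_def
proof (intro ballI)
  fix u v assume u: "u \<in> vec_carrier R n" and v: "v \<in> vec_carrier R n"
  have "form_h R J l n (mat_vec R n N u) (mat_vec R n N v)
      = form_h R J l n (mat_vec R n M (mat_vec R n N u)) (mat_vec R n M (mat_vec R n N v))"
    using M N u v by (simp add: preserves_form_h_def mat_vec_closed)
  also have "\<dots> = form_h R J l n u v"
    by (rule form_h_cong[OF J l u v]) (simp_all add: mat_vec_inverse M N u v)
  finally show "form_h R J l n (mat_vec R n N u) (mat_vec R n N v) = form_h R J l n u v" .
qed

lemma preserves_form_f_mod_one:
  assumes J: "\<And>x. x \<in> carrier R \<Longrightarrow> J x \<in> carrier R" and "\<zero> \<in> D"
  shows "preserves_form_f_mod R J n D (mat_one R n)"
  unfolding preserves_form_f_mod_def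
proof
  fix u assume u: "u \<in> vec_carrier R n"
  then have "form_f R J n (mat_vec R n (mat_one R n) u) (mat_vec R n (mat_one R n) u) = form_f R J n u u"
    by (intro form_f_cong[OF J u u]) (simp_all add: mat_vec_one)
  then show "form_f R J n (mat_vec R n (mat_one R n) u) (mat_vec R n (mat_one R n) u) \<ominus> form_f R J n u u \<in> D"
    using assms u by (simp add: form_f_closed a_minus_def r_neg)
qed

lemma preserves_form_f_mod_mult:
  assumes J: "\<And>x. x \<in> carrier R \<Longrightarrow> J x \<in> carrier R" and D: "additive_subgroup D R"
    and M: "M \<in> mat_carrier R n" "preserves_form_f_mod R J n D M"
    and N: "N \<in> mat_carrier R n" "preserves_form_f_mod R J n D N"
  shows "preserves_form_f_mod R J n D (mat_mult R n M N)"
  unfolding preserves_form_f_mod_def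
proof
  fix u assume u: "u \<in> vec_carrier R n"
  define w where "w = mat_vec R n N u"
  have w: "w \<in> vec_carrier R n" unfolding w_def using N u by (simp add: mat_vec_closed)
  have "form_f R J n (mat_vec R n M w) (mat_vec R n M w) \<ominus> form_f R J n w w \<in> D"
    "form_f R J n w w \<ominus> form_f R J n u u \<in> D"
    using M N u w unfolding preserves_form_f_mod_def w_def by auto
  moreover have "form_f R J n (mat_vec R n M w) (mat_vec R n M w) \<in> carrier R"
    "form_f R J n w w \<in> carrier R" "form_f R J n u u \<in> carrier R"
    using form_f_closed[OF J] mat_vec_closed[OF M(1) w] u w by simp_all
  ultimately have "form_f R J n (mat_vec R n M w) (mat_vec R n M w) \<ominus> form_f R J n u u \<in> D"
    using diff_mem_additive_subgroup_trans[OF D] by blast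
  moreover have "form_f R J n (mat_vec R n (mat_mult R n M N) u) (mat_vec R n (mat_mult R n M N) u)
      = form_f R J n (mat_vec R n M w) (mat_vec R n M w)"
    by (rule form_f_cong[OF J mat_vec_closed[OF M(1) w] mat_vec_closed[OF M(1) w]])
      (simp_all add: w_def mat_vec_mult M N u)
  ultimately show "form_f R J n (mat_vec R n (mat_mult R n M N) u) (mat_vec R n (mat_mult R n M N) u)
      \<ominus> form_f R J n u u \<in> D"
    by simp
qed

lemma preserves_form_f_mod_inverse:
  assumes J: "\<And>x. x \<in> carrier R \<Longrightarrow> J x \<in> carrier R" and D: "additive_subgroup D R"
    and M: "M \<in> mat_carrier R n" "preserves_form_f_mod R J n D M"
    and N: "N \<in> mat_carrier R n" "mat_mult R n M N = mat_one R n"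
  shows "preserves_form_f_mod R J n D N"
  unfolding preserves_form_f_mod_def
proof
  fix u assume u: "u \<in> vec_carrier R n"
  define w where "w = mat_vec R n N u"
  have w: "w \<in> vec_carrier R n" unfolding w_def using N u by (simp add: mat_vec_closed)
  have "form_f R J n (mat_vec R n M w) (mat_vec R n M w) = form_f R J n u u"
    by (rule form_f_cong[OF J u u]) (simp_all add: w_def mat_vec_inverse M N u)
  moreover have "form_f R J n (mat_vec R n M w) (mat_vec R n M w) \<ominus> form_f R J n w w \<in> D"
    using M w unfolding preserves_form_f_mod_def by blast
  ultimately have "form_f R J n u u \<ominus> form_f R J n w w \<in> D" by simp
  moreover have "form_f R J n u u \<in> carrier R" "form_f R J n w w \<in> carrier R"
    using form_f_closed[OF J u u] form_f_closed[OF J w w] by simp_all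
  ultimately have "form_f R J n w w \<ominus> form_f R J n u u \<in> D"
    using diff_mem_additive_subgroup_sym[OF D] by blast
  then show "form_f R J n (mat_vec R n N u) (mat_vec R n N u) \<ominus> form_f R J n u u \<in> D"
    by (simp add: w_def)
qed

lemma mat_congruent_one_one: "\<zero> \<in> K \<Longrightarrow> mat_congruent_one R n K (mat_one R n)"
  unfolding mat_congruent_one_def by (simp add: a_minus_def r_neg)

lemma mat_congruent_one_mult:
  assumes K: "ideal K R"
    and M: "M \<in> mat_carrier R n" "mat_congruent_one R n K M"
    and N: "N \<in> mat_carrier R n" "mat_congruent_one R n K N"
  shows "mat_congruent_one R n K (mat_mult R n M N)"
  unfolding mat_congruent_one_def
proof (intro ballI)
  fix i j assume ij: "i \<in> Omega n" "j \<in> Omega n"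
  have KR: "additive_subgroup K R" using K by (rule ideal.axioms(1))
  have "mat_mult R n M N i j \<ominus> mat_mult R n (mat_one R n) N i j \<in> K"
    unfolding mat_mult_entry[OF ij]
  proof (rule finsum_diff_mem_additive_subgroup[OF KR])
    fix k assume k: "k \<in> Omega n"
    have "(M i k \<ominus> mat_one R n i k) \<otimes> N k j \<in> K"
      using M N ij k ideal.I_r_closed[OF K] unfolding mat_congruent_one_def by simp
    then show "M i k \<otimes> N k j \<ominus> mat_one R n i k \<otimes> N k j \<in> K"
      using M N by (simp add: a_minus_def l_distr l_minus)
  qed (use M N in simp_all)
  then have "mat_mult R n M N i j \<ominus> N i j \<in> K"
    using N by (simp add: mat_mult_one_left)
  moreover have "N i j \<ominus> mat_one R n i j \<in> K"
    using N ij unfolding mat_congruent_one_def by blast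
  ultimately show "mat_mult R n M N i j \<ominus> mat_one R n i j \<in> K"
    by (rule diff_mem_additive_subgroup_trans[OF KR, rotated 3])
      (simp_all add: mat_carrier_closed[OF mat_mult_closed[OF M(1) N(1)]] mat_carrier_closed[OF N(1)])
qed

lemma mat_congruent_one_inverse:
  assumes K: "ideal K R"
    and M: "M \<in> mat_carrier R n" "mat_congruent_one R n K M"
    and N: "N \<in> mat_carrier R n" "mat_mult R n N M = mat_one R n"
  shows "mat_congruent_one R n K N"
  unfolding mat_congruent_one_def
proof (intro ballI)
  fix i j assume ij: "i \<in> Omega n" "j \<in> Omega n"
  have KR: "additive_subgroup K R" using K by (rule ideal.axioms(1))
  have "mat_mult R n N (mat_one R n) i j \<ominus> mat_mult R n N M i j \<in> K"
    unfolding mat_mult_entry[OF ij]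
  proof (rule finsum_diff_mem_additive_subgroup[OF KR])
    fix k assume k: "k \<in> Omega n"
    have "mat_one R n k j \<ominus> M k j \<in> K"
      using M ij k unfolding mat_congruent_one_def by (auto intro: diff_mem_additive_subgroup_sym[OF KR])
    then have "N i k \<otimes> (mat_one R n k j \<ominus> M k j) \<in> K"
      using N ideal.I_l_closed[OF K] by simp
    then show "N i k \<otimes> mat_one R n k j \<ominus> N i k \<otimes> M k j \<in> K"
      using M N by (simp add: a_minus_def r_distr r_minus)
  qed (use M N in simp_all)
  then show "N i j \<ominus> mat_one R n i j \<in> K"
    using N by (simp add: mat_mult_one_right)
qed

lemma mat_one_U2n_rel:
  assumes J: "\<And>x. x \<in> carrier R \<Longrightarrow> J x \<in> carrier R" and l: "l \<in> carrier R"
    and "\<zero> \<in> Lam" "\<zero> \<in> K" "\<zero> \<in> Del"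
  shows "mat_one R n \<in> U2n_rel R J l Lam n K Del"
proof -
  have "preserves_form_f_mod R J n Lam (mat_one R n)" "preserves_form_f_mod R J n Del (mat_one R n)"
    using assms by (simp_all add: preserves_form_f_mod_one[of J, OF J])
  then show ?thesis
    using assms by (simp add: U2n_rel_iff U2n_iff GL_mat_one preserves_form_h_one[of J, OF J l]
        mat_congruent_one_one)
qed

end

locale hyperbolic_form = ring R for R (structure) +
  fixes J :: "'a \<Rightarrow> 'a" and l :: 'a and Lam :: "'a set" and n :: nat
  assumes J_closed: "\<And>x. x \<in> carrier R \<Longrightarrow> J x \<in> carrier R"
    and l_closed: "l \<in> carrier R"
    and Lam_subgroup: "additive_subgroup Lam R"
begin

abbreviation "G \<equiv> U2n_group R J l Lam n"

lemma U2n_group_simps [simp]: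
  "carrier G = U2n R J l Lam n" "monoid.mult G = mat_mult R n" "\<one>\<^bsub>G\<^esub> = mat_one R n"
  by (simp_all add: U2n_group_def)

lemma zero_Lam: "\<zero> \<in> Lam"
  using Lam_subgroup by (rule additive_subgroup.zero_closed)

lemma U2n_mat_carrier: "M \<in> U2n R J l Lam n \<Longrightarrow> M \<in> mat_carrier R n"
  by (simp add: U2n_def GL_def)

lemma U2n_mult_closed:
  assumes "M \<in> U2n R J l Lam n" "N \<in> U2n R J l Lam n"
  shows "mat_mult R n M N \<in> U2n R J l Lam n"
proof -
  have M: "M \<in> GL R n" "M \<in> mat_carrier R n" "preserves_form_h R J l n M" "preserves_form_f_mod R J n Lam M"
    and N: "N \<in> GL R n" "N \<in> mat_carrier R n" "preserves_form_h R J l n N" "preserves_form_f_mod R J n Lam N"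
    using assms U2n_mat_carrier[OF assms(1)] U2n_mat_carrier[OF assms(2)] by (simp_all add: U2n_iff)
  show ?thesis
    unfolding U2n_iff using GL_mult[OF M(1) N(1)] preserves_form_h_mult[OF J_closed l_closed M(2,3) N(2,3)]
      preserves_form_f_mod_mult[OF J_closed Lam_subgroup M(2,4) N(2,4)] by blast
qed

lemma U2n_inverse:
  assumes M: "M \<in> U2n R J l Lam n"
  obtains N where "N \<in> U2n R J l Lam n" "mat_mult R n N M = mat_one R n"
proof -
  have MGL: "M \<in> GL R n" and Mh: "preserves_form_h R J l n M" and Mf: "preserves_form_f_mod R J n Lam M"
    using M by (simp_all add: U2n_iff)
  then obtain N where N: "N \<in> mat_carrier R n" "mat_mult R n M N = mat_one R n" "mat_mult R n N M = mat_one R n"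
    unfolding GL_def by blast
  have Mmat: "M \<in> mat_carrier R n" by (rule U2n_mat_carrier[OF M])
  have "N \<in> GL R n"
    unfolding GL_def using Mmat N by blast
  moreover have "preserves_form_h R J l n N"
    by (rule preserves_form_h_inverse[OF J_closed l_closed Mmat Mh N(1,2)])
  moreover have "preserves_form_f_mod R J n Lam N"
    by (rule preserves_form_f_mod_inverse[OF J_closed Lam_subgroup Mmat Mf N(1,2)])
  ultimately have "N \<in> U2n R J l Lam n" by (simp add: U2n_iff)
  then show ?thesis using N(3) by (rule that)
qed

lemma group_U2n_group: "group G"
proof (rule groupI)
  show "\<one>\<^bsub>G\<^esub> \<in> carrier G"
    using mat_one_U2n_rel[OF J_closed l_closed zero_Lam zero_Lam zero_Lam]
    by (simp add: U2n_rel_iff)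
  fix x y z assume "x \<in> carrier G" "y \<in> carrier G" "z \<in> carrier G"
  then show "x \<otimes>\<^bsub>G\<^esub> y \<in> carrier G" "x \<otimes>\<^bsub>G\<^esub> y \<otimes>\<^bsub>G\<^esub> z = x \<otimes>\<^bsub>G\<^esub> (y \<otimes>\<^bsub>G\<^esub> z)"
    "\<one>\<^bsub>G\<^esub> \<otimes>\<^bsub>G\<^esub> x = x"
    by (simp_all add: U2n_mult_closed mat_mult_assoc mat_mult_one_left U2n_mat_carrier)
next
  fix x assume "x \<in> carrier G"
  then obtain y where "y \<in> U2n R J l Lam n" "mat_mult R n y x = mat_one R n"
    using U2n_inverse[of x] by auto
  then show "\<exists>y\<in>carrier G. y \<otimes>\<^bsub>G\<^esub> x = \<one>\<^bsub>G\<^esub>" by auto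
qed

lemma U2n_rel_subgroup:
  assumes K: "ideal K R" and Del: "additive_subgroup Del R"
  shows "subgroup (U2n_rel R J l Lam n K Del) G"
proof -
  interpret group G by (rule group_U2n_group)
  show ?thesis
  proof
    show "U2n_rel R J l Lam n K Del \<subseteq> carrier G" by (auto simp: U2n_rel_def)
    show "\<one>\<^bsub>G\<^esub> \<in> U2n_rel R J l Lam n K Del"
      using mat_one_U2n_rel[OF J_closed l_closed] Lam_subgroup Del ideal.axioms(1)[OF K]
      by (simp add: additive_subgroup.zero_closed)
  next
    fix x y assume "x \<in> U2n_rel R J l Lam n K Del" "y \<in> U2n_rel R J l Lam n K Del"
    then have x: "x \<in> U2n R J l Lam n" "x \<in> mat_carrier R n" "mat_congruent_one R n K x"
        "preserves_form_f_mod R J n Del x"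
      and y: "y \<in> U2n R J l Lam n" "y \<in> mat_carrier R n" "mat_congruent_one R n K y"
        "preserves_form_f_mod R J n Del y"
      by (simp_all add: U2n_rel_iff U2n_mat_carrier)
    then show "x \<otimes>\<^bsub>G\<^esub> y \<in> U2n_rel R J l Lam n K Del"
      by (simp add: U2n_rel_iff U2n_mult_closed mat_congruent_one_mult[OF K x(2,3) y(2,3)]
          preserves_form_f_mod_mult[OF J_closed Del x(2,4) y(2,4)])
  next
    fix x assume x: "x \<in> U2n_rel R J l Lam n K Del"
    then have xG: "x \<in> carrier G" and xM: "x \<in> mat_carrier R n"
      by (simp_all add: U2n_rel_iff U2n_mat_carrier)
    have xinvM: "inv\<^bsub>G\<^esub> x \<in> mat_carrier R n"
      using inv_closed[OF xG] by (simp add: U2n_mat_carrier)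
    have "mat_congruent_one R n K (inv\<^bsub>G\<^esub> x)"
      using mat_congruent_one_inverse[OF K xM _ xinvM] l_inv[OF xG] x by (simp add: U2n_rel_iff)
    moreover have "preserves_form_f_mod R J n Del (inv\<^bsub>G\<^esub> x)"
      using preserves_form_f_mod_inverse[OF J_closed Del xM _ xinvM] r_inv[OF xG] x
      by (simp add: U2n_rel_iff)
    ultimately show "inv\<^bsub>G\<^esub> x \<in> U2n_rel R J l Lam n K Del"
      using inv_closed[OF xG] by (simp add: U2n_rel_iff)
  qed
qed

end

section \<open>Localization at a central multiplicative set\<close>

locale central_localization = ring R for R (structure) +
  fixes S :: "'a set"
  assumes S_subset: "S \<subseteq> carrier R"
    and S_central: "\<And>s x. s \<in> S \<Longrightarrow> x \<in> carrier R \<Longrightarrow> s \<otimes> x = x \<otimes> s"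
    and one_S: "\<one> \<in> S"
    and S_mult_closed: "\<And>s t. s \<in> S \<Longrightarrow> t \<in> S \<Longrightarrow> s \<otimes> t \<in> S"
begin

lemma S_closed [simp]: "s \<in> S \<Longrightarrow> s \<in> carrier R"
  using S_subset by auto

lemma S_left_commute: "s \<in> S \<Longrightarrow> x \<in> carrier R \<Longrightarrow> y \<in> carrier R \<Longrightarrow> x \<otimes> (s \<otimes> y) = s \<otimes> (x \<otimes> y)"
  by (metis S_closed S_central m_assoc)

lemma S_commute: "s \<in> S \<Longrightarrow> x \<in> carrier R \<Longrightarrow> x \<otimes> s = s \<otimes> x"
  using S_central[of s x] by simp

lemmas S_ac = m_assoc S_commute S_left_commute

lemma loc_rel_iff:
  "((x, s), (y, t)) \<in> loc_rel R S \<longleftrightarrow>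
     x \<in> carrier R \<and> s \<in> S \<and> y \<in> carrier R \<and> t \<in> S \<and> (\<exists>u\<in>S. u \<otimes> t \<otimes> x = u \<otimes> s \<otimes> y)"
proof -
  have "u \<otimes> (t \<otimes> x \<ominus> s \<otimes> y) = \<zero> \<longleftrightarrow> u \<otimes> t \<otimes> x = u \<otimes> s \<otimes> y"
    if "x \<in> carrier R" "s \<in> S" "y \<in> carrier R" "t \<in> S" "u \<in> S" for u
  proof -
    have "u \<otimes> (t \<otimes> x \<ominus> s \<otimes> y) = u \<otimes> t \<otimes> x \<ominus> u \<otimes> s \<otimes> y"
      using that by (simp add: a_minus_def r_distr r_minus m_assoc)
    then show ?thesis using that by (simp add: diff_eq_zero_iff)
  qed
  then show ?thesis unfolding loc_rel_def by auto
qed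

lemma equiv_loc_rel: "equiv (carrier R \<times> S) (loc_rel R S)"
proof (rule equivI)
  show "refl_on (carrier R \<times> S) (loc_rel R S)"
    unfolding refl_on_def by (auto simp: loc_rel_iff loc_rel_def intro!: bexI[of _ \<one>] one_S)
  show "sym (loc_rel R S)"
    unfolding sym_def by (auto simp: loc_rel_iff) metis
  show "trans (loc_rel R S)"
  proof (rule transI)
    fix a b c assume ab: "(a, b) \<in> loc_rel R S" and bc: "(b, c) \<in> loc_rel R S"
    obtain x s y t z w where abc: "a = (x, s)" "b = (y, t)" "c = (z, w)"
      by (metis prod.exhaust)
    from ab bc obtain u v where car: "x \<in> carrier R" "s \<in> S" "y \<in> carrier R" "t \<in> S"
        "z \<in> carrier R" "w \<in> S" "u \<in> S" "v \<in> S"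
      and e1: "u \<otimes> t \<otimes> x = u \<otimes> s \<otimes> y" and e2: "v \<otimes> w \<otimes> y = v \<otimes> t \<otimes> z"
      unfolding abc loc_rel_iff by blast
    have "(u \<otimes> v \<otimes> t) \<otimes> w \<otimes> x = (v \<otimes> w) \<otimes> (u \<otimes> t \<otimes> x)"
      using car by (simp add: S_ac)
    also have "\<dots> = (u \<otimes> s) \<otimes> (v \<otimes> w \<otimes> y)" using car e1 by (simp add: S_ac)
    also have "\<dots> = (u \<otimes> s) \<otimes> (v \<otimes> t \<otimes> z)" using e2 by simp
    also have "\<dots> = (u \<otimes> v \<otimes> t) \<otimes> s \<otimes> z" using car by (simp add: S_ac)
    finally show "(a, c) \<in> loc_rel R S"
      unfolding abc loc_rel_iff using car
      by (intro conjI bexI[of _ "u \<otimes> v \<otimes> t"]) (auto intro: S_mult_closed)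
  qed
  show "loc_rel R S \<subseteq> (carrier R \<times> S) \<times> (carrier R \<times> S)"
    unfolding loc_rel_def by auto
qed

lemma frac_eq_iff:
  "x \<in> carrier R \<Longrightarrow> s \<in> S \<Longrightarrow> y \<in> carrier R \<Longrightarrow> t \<in> S \<Longrightarrow>
    frac R S x s = frac R S y t \<longleftrightarrow> (\<exists>u\<in>S. u \<otimes> t \<otimes> x = u \<otimes> s \<otimes> y)"
  unfolding frac_def using equiv_class_eq_iff[OF equiv_loc_rel, of "(x, s)" "(y, t)"]
  by (simp add: loc_rel_iff)

lemma frac_eqI:
  "x \<in> carrier R \<Longrightarrow> s \<in> S \<Longrightarrow> y \<in> carrier R \<Longrightarrow> t \<in> S \<Longrightarrow> t \<otimes> x = s \<otimes> y \<Longrightarrow>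
    frac R S x s = frac R S y t"
  by (subst frac_eq_iff) (auto intro!: bexI[of _ \<one>] one_S simp: m_assoc)

lemma mem_frac_iff: "p \<in> frac R S x s \<longleftrightarrow> ((x, s), p) \<in> loc_rel R S"
  unfolding frac_def by auto

lemma frac_self: "x \<in> carrier R \<Longrightarrow> s \<in> S \<Longrightarrow> (x, s) \<in> frac R S x s"
  using equiv_loc_rel unfolding mem_frac_iff equiv_def refl_on_def by auto

lemma mem_fracE:
  assumes "(y, t) \<in> frac R S x s"
  obtains u where "u \<in> S" "u \<otimes> t \<otimes> x = u \<otimes> s \<otimes> y" "y \<in> carrier R" "t \<in> S"
  using assms unfolding mem_frac_iff loc_rel_iff by blast

lemma carrier_loc_ring: "carrier (loc_ring R S) = {frac R S x s | x s. x \<in> carrier R \<and> s \<in> S}"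
  unfolding loc_ring_def quotient_def frac_def by auto

lemma frac_closed [simp]: "x \<in> carrier R \<Longrightarrow> s \<in> S \<Longrightarrow> frac R S x s \<in> carrier (loc_ring R S)"
  unfolding carrier_loc_ring by auto

lemma loc_ring_carrierE:
  assumes "Q \<in> carrier (loc_ring R S)"
  obtains x s where "Q = frac R S x s" "x \<in> carrier R" "s \<in> S"
  using assms unfolding carrier_loc_ring by blast

lemma Union_frac_pairs:
  assumes "x \<in> carrier R" "s \<in> S" "y \<in> carrier R" "t \<in> S"
    and F: "\<And>x' s' y' t'. (x', s') \<in> frac R S x s \<Longrightarrow> (y', t') \<in> frac R S y t \<Longrightarrow>
      F (x', s') (y', t') = F (x, s) (y, t)"
  shows "\<Union> ((\<lambda>(p, q). F p q) ` (frac R S x s \<times> frac R S y t)) = F (x, s) (y, t)"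
proof (rule SUP_eq_const)
  show "frac R S x s \<times> frac R S y t \<noteq> {}"
    using assms(1-4) frac_self by blast
  fix z assume "z \<in> frac R S x s \<times> frac R S y t"
  moreover obtain x' s' y' t' where "z = ((x', s'), (y', t'))"
    by (metis prod.exhaust)
  ultimately show "(case z of (p, q) \<Rightarrow> F p q) = F (x, s) (y, t)"
    using F by simp
qed

lemma loc_mult_frac:
  assumes xy: "x \<in> carrier R" "s \<in> S" "y \<in> carrier R" "t \<in> S"
  shows "loc_mult R S (frac R S x s) (frac R S y t) = frac R S (x \<otimes> y) (s \<otimes> t)"
  unfolding loc_mult_def
proof (subst Union_frac_pairs[OF xy], simp_all)
  fix x' s' y' t' assume x': "(x', s') \<in> frac R S x s" and y': "(y', t') \<in> frac R S y t"
  obtain u where u: "u \<in> S" "u \<otimes> s' \<otimes> x = u \<otimes> s \<otimes> x'" "x' \<in> carrier R" "s' \<in> S"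
    using x' by (rule mem_fracE)
  obtain v where v: "v \<in> S" "v \<otimes> t' \<otimes> y = v \<otimes> t \<otimes> y'" "y' \<in> carrier R" "t' \<in> S"
    using y' by (rule mem_fracE)
  have "(u \<otimes> v) \<otimes> (s \<otimes> t) \<otimes> (x' \<otimes> y') = (u \<otimes> s \<otimes> x') \<otimes> (v \<otimes> t \<otimes> y')"
    using xy u(1,3,4) v(1,3,4) by (simp add: S_ac)
  also have "\<dots> = (u \<otimes> s' \<otimes> x) \<otimes> (v \<otimes> t' \<otimes> y)" by (simp only: u(2) v(2))
  also have "\<dots> = (u \<otimes> v) \<otimes> (s' \<otimes> t') \<otimes> (x \<otimes> y)"
    using xy u(1,3,4) v(1,3,4) by (simp add: S_ac)
  finally have eq: "(u \<otimes> v) \<otimes> (s \<otimes> t) \<otimes> (x' \<otimes> y') = (u \<otimes> v) \<otimes> (s' \<otimes> t') \<otimes> (x \<otimes> y)" .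
  show "frac R S (x' \<otimes> y') (s' \<otimes> t') = frac R S (x \<otimes> y) (s \<otimes> t)"
    unfolding frac_eq_iff[OF m_closed[OF u(3) v(3)] S_mult_closed[OF u(4) v(4)] m_closed[OF xy(1,3)]
        S_mult_closed[OF xy(2,4)]]
    using eq S_mult_closed[OF u(1) v(1)] by blast
qed

lemma loc_add_frac:
  assumes xy: "x \<in> carrier R" "s \<in> S" "y \<in> carrier R" "t \<in> S"
  shows "loc_add R S (frac R S x s) (frac R S y t) = frac R S (x \<otimes> t \<oplus> y \<otimes> s) (s \<otimes> t)"
  unfolding loc_add_def
proof (subst Union_frac_pairs[OF xy], simp_all)
  fix x' s' y' t' assume x': "(x', s') \<in> frac R S x s" and y': "(y', t') \<in> frac R S y t"
  obtain u where u: "u \<in> S" "u \<otimes> s' \<otimes> x = u \<otimes> s \<otimes> x'" "x' \<in> carrier R" "s' \<in> S"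
    using x' by (rule mem_fracE)
  obtain v where v: "v \<in> S" "v \<otimes> t' \<otimes> y = v \<otimes> t \<otimes> y'" "y' \<in> carrier R" "t' \<in> S"
    using y' by (rule mem_fracE)
  have "(u \<otimes> v) \<otimes> (s \<otimes> t) \<otimes> (x' \<otimes> t' \<oplus> y' \<otimes> s')
      = (v \<otimes> t \<otimes> t') \<otimes> (u \<otimes> s \<otimes> x') \<oplus> (u \<otimes> s \<otimes> s') \<otimes> (v \<otimes> t \<otimes> y')"
    using xy u(1,3,4) v(1,3,4) by (simp add: S_ac r_distr)
  also have "\<dots> = (v \<otimes> t \<otimes> t') \<otimes> (u \<otimes> s' \<otimes> x) \<oplus> (u \<otimes> s \<otimes> s') \<otimes> (v \<otimes> t' \<otimes> y)"
    by (simp only: u(2) v(2))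
  also have "\<dots> = (u \<otimes> v) \<otimes> (s' \<otimes> t') \<otimes> (x \<otimes> t \<oplus> y \<otimes> s)"
    using xy u(1,3,4) v(1,3,4) by (simp add: S_ac r_distr)
  finally have eq: "(u \<otimes> v) \<otimes> (s \<otimes> t) \<otimes> (x' \<otimes> t' \<oplus> y' \<otimes> s')
      = (u \<otimes> v) \<otimes> (s' \<otimes> t') \<otimes> (x \<otimes> t \<oplus> y \<otimes> s)" .
  show "frac R S (x' \<otimes> t' \<oplus> y' \<otimes> s') (s' \<otimes> t') = frac R S (x \<otimes> t \<oplus> y \<otimes> s) (s \<otimes> t)"
  proof -
    have cs: "x' \<otimes> t' \<oplus> y' \<otimes> s' \<in> carrier R" "x \<otimes> t \<oplus> y \<otimes> s \<in> carrier R"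
      using xy u(3,4) v(3,4) by simp_all
    show ?thesis
      unfolding frac_eq_iff[OF cs(1) S_mult_closed[OF u(4) v(4)] cs(2) S_mult_closed[OF xy(2,4)]]
      using eq S_mult_closed[OF u(1) v(1)] by blast
  qed
qed

lemma loc_ring_simps [simp]:
  "monoid.mult (loc_ring R S) = loc_mult R S"
  "ring.add (loc_ring R S) = loc_add R S"
  "\<one>\<^bsub>loc_ring R S\<^esub> = frac R S \<one> \<one>"
  "\<zero>\<^bsub>loc_ring R S\<^esub> = frac R S \<zero> \<one>"
  by (simp_all add: loc_ring_def)

lemma loc_add_closed:
  "P \<in> carrier (loc_ring R S) \<Longrightarrow> Q \<in> carrier (loc_ring R S) \<Longrightarrow> loc_add R S P Q \<in> carrier (loc_ring R S)"
  by (auto elim!: loc_ring_carrierE simp: loc_add_frac intro!: frac_closed S_mult_closed)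

lemma loc_mult_closed:
  "P \<in> carrier (loc_ring R S) \<Longrightarrow> Q \<in> carrier (loc_ring R S) \<Longrightarrow> loc_mult R S P Q \<in> carrier (loc_ring R S)"
  by (auto elim!: loc_ring_carrierE simp: loc_mult_frac intro!: frac_closed S_mult_closed)

lemma abelian_group_loc_ring: "abelian_group (loc_ring R S)"
proof (rule abelian_groupI, simp_all add: loc_add_closed one_S)
  fix P Q V
  assume "P \<in> carrier (loc_ring R S)" "Q \<in> carrier (loc_ring R S)" "V \<in> carrier (loc_ring R S)"
  then obtain x s y t z w where e: "P = frac R S x s" "Q = frac R S y t" "V = frac R S z w"
    and c: "x \<in> carrier R" "s \<in> S" "y \<in> carrier R" "t \<in> S" "z \<in> carrier R" "w \<in> S"
    by (metis loc_ring_carrierE)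
  show "loc_add R S (loc_add R S P Q) V = loc_add R S P (loc_add R S Q V)"
    unfolding e using c
    by (simp add: loc_add_frac S_mult_closed)
      (rule frac_eqI, auto intro!: S_mult_closed simp: S_ac r_distr l_distr a_ac)
  show "loc_add R S P Q = loc_add R S Q P"
    unfolding e using c
    by (simp add: loc_add_frac S_mult_closed)
      (rule frac_eqI, auto intro!: S_mult_closed simp: S_ac r_distr l_distr a_ac)
next
  fix P assume "P \<in> carrier (loc_ring R S)"
  then obtain x s where e: "P = frac R S x s" and c: "x \<in> carrier R" "s \<in> S"
    by (metis loc_ring_carrierE)
  show "loc_add R S (frac R S \<zero> \<one>) P = P"
    unfolding e using c one_S by (simp add: loc_add_frac)
  have "loc_add R S (frac R S (\<ominus> x) s) P = frac R S \<zero> \<one>"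
    unfolding e using c one_S
    by (simp add: loc_add_frac S_mult_closed) (rule frac_eqI, auto intro!: S_mult_closed simp: l_minus l_neg)
  then show "\<exists>Q\<in>carrier (loc_ring R S). loc_add R S Q P = frac R S \<zero> \<one>"
    using c by (intro bexI[of _ "frac R S (\<ominus> x) s"]) auto
qed

lemma monoid_loc_ring: "monoid (loc_ring R S)"
proof (rule monoidI, simp_all add: loc_mult_closed one_S)
  fix P Q V
  assume "P \<in> carrier (loc_ring R S)" "Q \<in> carrier (loc_ring R S)" "V \<in> carrier (loc_ring R S)"
  then obtain x s y t z w where e: "P = frac R S x s" "Q = frac R S y t" "V = frac R S z w"
    and c: "x \<in> carrier R" "s \<in> S" "y \<in> carrier R" "t \<in> S" "z \<in> carrier R" "w \<in> S"
    by (metis loc_ring_carrierE)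
  show "loc_mult R S (loc_mult R S P Q) V = loc_mult R S P (loc_mult R S Q V)"
    unfolding e using c by (simp add: loc_mult_frac S_mult_closed m_assoc)
next
  fix P assume "P \<in> carrier (loc_ring R S)"
  then obtain x s where e: "P = frac R S x s" and c: "x \<in> carrier R" "s \<in> S"
    by (metis loc_ring_carrierE)
  show "loc_mult R S (frac R S \<one> \<one>) P = P" "loc_mult R S P (frac R S \<one> \<one>) = P"
    unfolding e using c one_S by (simp_all add: loc_mult_frac)
qed

lemma ring_loc_ring: "ring (loc_ring R S)"
proof (rule ringI[OF abelian_group_loc_ring monoid_loc_ring], simp_all)
  fix P Q V
  assume "P \<in> carrier (loc_ring R S)" "Q \<in> carrier (loc_ring R S)" "V \<in> carrier (loc_ring R S)"
  then obtain x s y t z w where e: "P = frac R S x s" "Q = frac R S y t" "V = frac R S z w"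
    and c: "x \<in> carrier R" "s \<in> S" "y \<in> carrier R" "t \<in> S" "z \<in> carrier R" "w \<in> S"
    by (metis loc_ring_carrierE)
  show "loc_mult R S (loc_add R S P Q) V = loc_add R S (loc_mult R S P V) (loc_mult R S Q V)"
    unfolding e using c
    by (simp add: loc_mult_frac loc_add_frac S_mult_closed)
      (rule frac_eqI, auto intro!: S_mult_closed simp: S_ac r_distr l_distr a_ac)
  show "loc_mult R S V (loc_add R S P Q) = loc_add R S (loc_mult R S V P) (loc_mult R S V Q)"
    unfolding e using c
    by (simp add: loc_mult_frac loc_add_frac S_mult_closed)
      (rule frac_eqI, auto intro!: S_mult_closed simp: S_ac r_distr l_distr a_ac)
qed

lemma frac_ring_hom_ring: "ring_hom_ring R (loc_ring R S) (\<lambda>x. frac R S x \<one>)"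
  by (intro ring_hom_ringI2 ring_axioms ring_loc_ring ring_hom_memI)
    (auto simp: loc_mult_frac loc_add_frac one_S)

lemma frac_diff:
  assumes "x \<in> carrier R" "y \<in> carrier R"
  shows "frac R S x \<one> \<ominus>\<^bsub>loc_ring R S\<^esub> frac R S y \<one> = frac R S (x \<ominus> y) \<one>"
proof -
  interpret frac: ring_hom_ring R "loc_ring R S" "\<lambda>x. frac R S x \<one>"
    by (rule frac_ring_hom_ring)
  show ?thesis
    using assms unfolding a_minus_def by simp
qed

end

definition mat_map :: "('a \<Rightarrow> 'c) \<Rightarrow> (int \<Rightarrow> int \<Rightarrow> 'a) \<Rightarrow> (int \<Rightarrow> int \<Rightarrow> 'c)" where
  "mat_map h M = (\<lambda>i j. h (M i j))"

context ring_hom_ring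
begin

lemma mat_map_carrier: "M \<in> mat_carrier R n \<Longrightarrow> mat_map h M \<in> mat_carrier S n"
  unfolding mat_map_def mat_carrier_def by auto

lemma mat_map_mult:
  assumes "M \<in> mat_carrier R n" "N \<in> mat_carrier R n"
  shows "mat_map h (mat_mult R n M N) = mat_mult S n (mat_map h M) (mat_map h N)"
  using assms by (intro ext) (auto simp: mat_mult_def mat_map_def Pi_def comp_def)

lemma mat_map_one: "mat_map h (mat_one R n) = mat_one S n"
  unfolding mat_map_def mat_one_def by (intro ext) auto

lemma vec_map_carrier: "u \<in> vec_carrier R n \<Longrightarrow> h \<circ> u \<in> vec_carrier S n"
  by (auto simp: vec_carrier_def)

lemma mat_map_vec:
  assumes "M \<in> mat_carrier R n" "u \<in> vec_carrier R n"
  shows "mat_vec S n (mat_map h M) (h \<circ> u) = h \<circ> mat_vec R n M u"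
proof (intro ext)
  fix i
  show "mat_vec S n (mat_map h M) (h \<circ> u) i = (h \<circ> mat_vec R n M u) i"
    using assms unfolding mat_vec_def mat_map_def comp_def
    by (subst hom_finsum) (auto simp: Pi_def R.vec_carrier_closed intro!: S.finsum_cong')
qed

lemma map_form_f:
  assumes J: "\<And>x. x \<in> carrier R \<Longrightarrow> J x \<in> carrier R"
    and hJ: "\<And>x. x \<in> carrier R \<Longrightarrow> h (J x) = J' (h x)"
    and "u \<in> vec_carrier R n" "v \<in> vec_carrier R n"
  shows "form_f S J' n (h \<circ> u) (h \<circ> v) = h (form_f R J n u v)"
  using assms unfolding form_f_def
  by (subst hom_finsum) (auto simp: Pi_def R.vec_carrier_closed Omega_pos Omega_neg hJ[symmetric]
      intro!: S.finsum_cong')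

end

section \<open>Saturation and the Noetherian hypothesis\<close>

definition saturation :: "('a, 'b) ring_scheme \<Rightarrow> 'a set \<Rightarrow> 'a set \<Rightarrow> 'a set" where
  "saturation R S A = {x \<in> carrier R. \<exists>t \<in> S. t \<otimes>\<^bsub>R\<^esub> x \<in> A}"

context central_localization
begin

lemma loc_mat_eq_mat_map:
  assumes "M \<in> mat_carrier R n"
  shows "loc_mat R S n M = mat_map (\<lambda>x. frac R S x \<one>) M"
proof (intro ext)
  fix i j
  show "loc_mat R S n M i j = mat_map (\<lambda>x. frac R S x \<one>) M i j"
    using mat_carrier_outside[OF assms, of i j] by (simp add: loc_mat_def mat_map_def)
qed

lemma loc_inv_frac:
  assumes J: "\<And>x. x \<in> carrier R \<Longrightarrow> J x \<in> carrier R"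
    and J_mult: "\<And>x y. x \<in> carrier R \<Longrightarrow> y \<in> carrier R \<Longrightarrow> J (x \<otimes> y) = J y \<otimes> J x"
    and J_S: "\<And>s. s \<in> S \<Longrightarrow> J s = s"
    and xs: "x \<in> carrier R" "s \<in> S"
  shows "loc_inv R S J (frac R S x s) = frac R S (J x) s"
  unfolding loc_inv_def
proof (rule SUP_eq_const)
  show "frac R S x s \<noteq> {}" using frac_self[OF xs] by blast
  fix p assume p: "p \<in> frac R S x s"
  obtain x' s' where p_eq: "p = (x', s')" by (metis prod.exhaust)
  obtain u where u: "u \<in> S" "u \<otimes> s' \<otimes> x = u \<otimes> s \<otimes> x'" "x' \<in> carrier R" "s' \<in> S"
    using p unfolding p_eq by (rule mem_fracE)
  have "u \<otimes> s \<otimes> J x' = J (u \<otimes> s \<otimes> x')"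
    using xs u(1,3,4) J by (simp add: J_mult J_S S_mult_closed S_ac)
  also have "\<dots> = J (u \<otimes> s' \<otimes> x)" by (simp only: u(2))
  also have "\<dots> = u \<otimes> s' \<otimes> J x"
    using xs u(1,3,4) J by (simp add: J_mult J_S S_mult_closed S_ac)
  finally have "u \<otimes> s \<otimes> J x' = u \<otimes> s' \<otimes> J x" .
  then show "frac R S (J (fst p)) (snd p) = frac R S (J x) s"
    unfolding p_eq fst_conv snd_conv frac_eq_iff[OF J[OF u(3)] u(4) J[OF xs(1)] xs(2)]
    using u(1) by blast
qed

lemma loc_inv_closed:
  assumes "\<And>x. x \<in> carrier R \<Longrightarrow> J x \<in> carrier R"
    and "\<And>x y. x \<in> carrier R \<Longrightarrow> y \<in> carrier R \<Longrightarrow> J (x \<otimes> y) = J y \<otimes> J x"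
    and "\<And>s. s \<in> S \<Longrightarrow> J s = s"
    and "Q \<in> carrier (loc_ring R S)"
  shows "loc_inv R S J Q \<in> carrier (loc_ring R S)"
proof -
  obtain x s where "Q = frac R S x s" "x \<in> carrier R" "s \<in> S"
    using assms(4) by (rule loc_ring_carrierE)
  then show ?thesis by (simp add: loc_inv_frac[OF assms(1-3)] assms(1))
qed

lemma zero_loc_set: "\<zero> \<in> A \<Longrightarrow> \<zero>\<^bsub>loc_ring R S\<^esub> \<in> loc_set R S A"
  unfolding loc_set_def using one_S by auto

lemma saturation_subset_carrier: "saturation R S A \<subseteq> carrier R"
  unfolding saturation_def by blast

lemma saturation_subset: "A \<subseteq> carrier R \<Longrightarrow> A \<subseteq> saturation R S A"
  unfolding saturation_def using one_S by force

lemma frac_mem_loc_set_imp_saturation: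
  assumes A: "A \<subseteq> carrier R" and SA: "\<And>s a. s \<in> S \<Longrightarrow> a \<in> A \<Longrightarrow> s \<otimes> a \<in> A"
    and x: "x \<in> carrier R" and "frac R S x \<one> \<in> loc_set R S A"
  shows "x \<in> saturation R S A"
proof -
  obtain a s where a: "a \<in> A" "s \<in> S" and e: "frac R S x \<one> = frac R S a s"
    using assms(4) unfolding loc_set_def by blast
  have a_carrier: "a \<in> carrier R" using A a(1) by blast
  obtain u where u: "u \<in> S" "u \<otimes> s \<otimes> x = u \<otimes> \<one> \<otimes> a"
    using e unfolding frac_eq_iff[OF x one_S a_carrier a(2)] by blast
  have "(u \<otimes> s) \<otimes> x = u \<otimes> a" using u a_carrier by simp
  moreover have "u \<otimes> a \<in> A" using SA u(1) a(1) .
  ultimately show ?thesis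
    unfolding saturation_def using x S_mult_closed[OF u(1) a(2)] by (metis (no_types, lifting) mem_Collect_eq)
qed

lemma additive_subgroup_saturation:
  assumes A: "additive_subgroup A R" and SA: "\<And>s a. s \<in> S \<Longrightarrow> a \<in> A \<Longrightarrow> s \<otimes> a \<in> A"
  shows "additive_subgroup (saturation R S A) R"
proof (rule additive_subgroup_closedI)
  show "saturation R S A \<subseteq> carrier R" unfolding saturation_def by auto
  show "\<zero> \<in> saturation R S A"
    unfolding saturation_def using one_S additive_subgroup.zero_closed[OF A] by force
next
  fix x y assume "x \<in> saturation R S A" "y \<in> saturation R S A"
  then obtain t1 t2 where x: "x \<in> carrier R" "t1 \<in> S" "t1 \<otimes> x \<in> A"
    and y: "y \<in> carrier R" "t2 \<in> S" "t2 \<otimes> y \<in> A"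
    unfolding saturation_def by blast
  have "(t1 \<otimes> t2) \<otimes> (x \<oplus> y) = t2 \<otimes> (t1 \<otimes> x) \<oplus> t1 \<otimes> (t2 \<otimes> y)"
    using x y by (simp add: r_distr S_ac)
  also have "\<dots> \<in> A"
    using x y SA by (intro additive_subgroup.a_closed[OF A]) auto
  finally show "x \<oplus> y \<in> saturation R S A"
    unfolding saturation_def using x y S_mult_closed by blast
next
  fix x assume "x \<in> saturation R S A"
  then obtain t where x: "x \<in> carrier R" "t \<in> S" "t \<otimes> x \<in> A"
    unfolding saturation_def by blast
  have "t \<otimes> (\<ominus> x) = \<ominus> (t \<otimes> x)" using x by (simp add: r_minus)
  also have "\<dots> \<in> A" using x additive_subgroup.a_inv_closed[OF A] by blast
  finally show "\<ominus> x \<in> saturation R S A"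
    unfolding saturation_def using x by blast
qed

lemma ideal_saturation:
  assumes I: "ideal I R"
  shows "ideal (saturation R S I) R"
proof (rule idealI[OF ring_axioms])
  have "additive_subgroup (saturation R S I) R"
    using I by (intro additive_subgroup_saturation ideal.axioms(1) ideal.I_l_closed) auto
  then show "subgroup (saturation R S I) (add_monoid R)"
    by (rule additive_subgroup.a_subgroup)
next
  fix a x assume "a \<in> saturation R S I" and x: "x \<in> carrier R"
  then obtain t where a: "a \<in> carrier R" "t \<in> S" "t \<otimes> a \<in> I"
    unfolding saturation_def by blast
  have "t \<otimes> (x \<otimes> a) = x \<otimes> (t \<otimes> a)" using a x by (simp add: S_ac)
  then have "t \<otimes> (x \<otimes> a) \<in> I" using ideal.I_l_closed[OF I a(3) x] by simp
  then show "x \<otimes> a \<in> saturation R S I"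
    unfolding saturation_def using a x by blast
  have "t \<otimes> (a \<otimes> x) = (t \<otimes> a) \<otimes> x" using a x by (simp add: m_assoc)
  then have "t \<otimes> (a \<otimes> x) \<in> I" using ideal.I_r_closed[OF I a(3) x] by simp
  then show "a \<otimes> x \<in> saturation R S I"
    unfolding saturation_def using a x by blast
qed

lemma saturation_mult_central_closed:
  assumes c: "c \<in> carrier R" "\<And>r. r \<in> carrier R \<Longrightarrow> c \<otimes> r = r \<otimes> c"
    and cA: "\<And>a. a \<in> A \<Longrightarrow> c \<otimes> a \<in> A" and "x \<in> saturation R S A"
  shows "c \<otimes> x \<in> saturation R S A"
proof -
  obtain t where x: "x \<in> carrier R" "t \<in> S" "t \<otimes> x \<in> A"
    using assms(4) unfolding saturation_def by blast
  have "t \<otimes> (c \<otimes> x) = c \<otimes> (t \<otimes> x)"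
    using x c by (simp add: S_ac)
  then have "t \<otimes> (c \<otimes> x) \<in> A" using cA x(3) by simp
  then show ?thesis
    unfolding saturation_def using x c by blast
qed

lemma saturation_common_multiplier:
  assumes SA: "\<And>s a. s \<in> S \<Longrightarrow> a \<in> A \<Longrightarrow> s \<otimes> a \<in> A"
    and "finite F" "F \<subseteq> saturation R S A"
  shows "\<exists>t\<in>S. \<forall>f\<in>F. t \<otimes> f \<in> A"
  using assms(2,3)
proof (induction F rule: finite_induct)
  case empty
  then show ?case using one_S by blast
next
  case (insert a F)
  then obtain t where t: "t \<in> S" "\<forall>f\<in>F. t \<otimes> f \<in> A" by blast
  obtain t' where t': "t' \<in> S" "t' \<otimes> a \<in> A" "a \<in> carrier R"
    using insert.prems unfolding saturation_def by blast
  have "(t' \<otimes> t) \<otimes> f \<in> A" if "f \<in> F" for f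
  proof -
    have "f \<in> carrier R" using that insert.prems unfolding saturation_def by blast
    then have "(t' \<otimes> t) \<otimes> f = t' \<otimes> (t \<otimes> f)" using t t' by (simp add: m_assoc)
    then show ?thesis using SA t t' that by simp
  qed
  moreover have "(t' \<otimes> t) \<otimes> a = t \<otimes> (t' \<otimes> a)"
    using t t' by (simp add: S_ac)
  then have "(t' \<otimes> t) \<otimes> a \<in> A" using SA t t' by simp
  ultimately show ?case using S_mult_closed[OF t'(1) t(1)] by blast
qed

lemma saturation_finitely_generated:
  assumes noeth: "noetherian_module R C"
    and C: "C \<subseteq> carrier R" "\<And>c r. c \<in> C \<Longrightarrow> r \<in> carrier R \<Longrightarrow> c \<otimes> r = r \<otimes> c" "S \<subseteq> C"
    and A: "additive_subgroup A R" and CA: "\<And>c a. c \<in> C \<Longrightarrow> a \<in> A \<Longrightarrow> c \<otimes> a \<in> A"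
  obtains F where "finite F" "F \<subseteq> saturation R S A"
    "saturation R S A = {finsum R (\<lambda>f. a f \<otimes> f) F | a. a \<in> F \<rightarrow> C}"
proof -
  have SA: "\<And>s a. s \<in> S \<Longrightarrow> a \<in> A \<Longrightarrow> s \<otimes> a \<in> A" using CA C(3) by blast
  have "\<forall>c\<in>C. \<forall>x\<in>saturation R S A. c \<otimes> x \<in> saturation R S A"
  proof (intro ballI)
    fix c x assume c: "c \<in> C" and x: "x \<in> saturation R S A"
    have "c \<in> carrier R" using c C(1) by blast
    then show "c \<otimes> x \<in> saturation R S A"
      by (rule saturation_mult_central_closed[OF _ C(2)[OF c] CA[OF c] x])
  qed
  with additive_subgroup_saturation[OF A SA] have "additive_subgroup (saturation R S A) R \<and>
      (\<forall>c\<in>C. \<forall>x\<in>saturation R S A. c \<otimes> x \<in> saturation R S A)"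
    by (rule conjI)
  then have "\<exists>F. finite F \<and> F \<subseteq> saturation R S A \<and>
      saturation R S A = {finsum R (\<lambda>f. a f \<otimes> f) F | a. a \<in> F \<rightarrow> C}"
    by (rule mp[OF spec[OF noeth[unfolded noetherian_module_def]]])
  then obtain F where "finite F \<and> F \<subseteq> saturation R S A \<and>
      saturation R S A = {finsum R (\<lambda>f. a f \<otimes> f) F | a. a \<in> F \<rightarrow> C}" ..
  then show ?thesis by (elim conjE) (rule that)
qed

lemma finsum_multiple_mem:
  assumes A: "additive_subgroup A R" and C: "C \<subseteq> carrier R"
    and CA: "\<And>c a. c \<in> C \<Longrightarrow> a \<in> A \<Longrightarrow> c \<otimes> a \<in> A"
    and s: "s \<in> S" and F: "finite F" "F \<subseteq> carrier R" and a: "a \<in> F \<rightarrow> C"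
    and sF: "\<And>f. f \<in> F \<Longrightarrow> s \<otimes> f \<in> A"
  shows "s \<otimes> finsum R (\<lambda>f. a f \<otimes> f) F \<in> A"
proof -
  have a_carrier: "\<And>f. f \<in> F \<Longrightarrow> a f \<in> carrier R" using a C by blast
  have F_carrier: "\<And>f. f \<in> F \<Longrightarrow> f \<in> carrier R" using F(2) by blast
  have "s \<otimes> finsum R (\<lambda>f. a f \<otimes> f) F = finsum R (\<lambda>f. s \<otimes> (a f \<otimes> f)) F"
    using s F(1) a_carrier F_carrier by (simp add: finsum_rdistr Pi_def)
  also have "\<dots> = finsum R (\<lambda>f. a f \<otimes> (s \<otimes> f)) F"
    using s a_carrier F_carrier by (intro finsum_cong') (simp_all add: Pi_def S_left_commute)
  also have "\<dots> \<in> A"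
    using sF a CA by (intro finsum_mem_additive_subgroup[OF A F(1)]) blast
  finally show ?thesis .
qed

lemma saturation_annihilator:
  assumes noeth: "noetherian_module R C"
    and C: "C \<subseteq> carrier R" "\<And>c r. c \<in> C \<Longrightarrow> r \<in> carrier R \<Longrightarrow> c \<otimes> r = r \<otimes> c" "S \<subseteq> C"
    and A: "additive_subgroup A R" and CA: "\<And>c a. c \<in> C \<Longrightarrow> a \<in> A \<Longrightarrow> c \<otimes> a \<in> A"
  shows "\<exists>s\<in>S. \<forall>r\<in>saturation R S A. s \<otimes> r \<in> A"
proof -
  obtain F where F: "finite F" "F \<subseteq> saturation R S A"
    and span: "saturation R S A = {finsum R (\<lambda>f. a f \<otimes> f) F | a. a \<in> F \<rightarrow> C}"
    by (rule saturation_finitely_generated[OF noeth C A CA])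
  have SA: "\<And>s a. s \<in> S \<Longrightarrow> a \<in> A \<Longrightarrow> s \<otimes> a \<in> A" using CA C(3) by blast
  obtain s where s: "s \<in> S" "\<And>f. f \<in> F \<Longrightarrow> s \<otimes> f \<in> A"
    using saturation_common_multiplier[OF SA F] by blast
  have F_carrier: "F \<subseteq> carrier R"
    using F(2) saturation_subset_carrier by (rule subset_trans)
  have "s \<otimes> r \<in> A" if "r \<in> saturation R S A" for r
  proof -
    have "r \<in> {finsum R (\<lambda>f. a f \<otimes> f) F | a. a \<in> F \<rightarrow> C}"
      using that unfolding span .
    then obtain a where a: "a \<in> F \<rightarrow> C" and r: "r = finsum R (\<lambda>f. a f \<otimes> f) F"
      by blast
    show ?thesis
      unfolding r by (rule finsum_multiple_mem[OF A C(1) CA s(1) F(1) F_carrier a s(2)])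
  qed
  then show ?thesis using s(1) by blast
qed

lemma loc_mat_congruent_one_imp:
  assumes A: "A \<subseteq> carrier R" and SA: "\<And>s a. s \<in> S \<Longrightarrow> a \<in> A \<Longrightarrow> s \<otimes> a \<in> A"
    and P: "P \<in> mat_carrier R n"
    and loc: "mat_congruent_one (loc_ring R S) n (loc_set R S A) (loc_mat R S n P)"
  shows "mat_congruent_one R n (saturation R S A) P"
  unfolding mat_congruent_one_def
proof (intro ballI)
  interpret frac: ring_hom_ring R "loc_ring R S" "\<lambda>x. frac R S x \<one>" by (rule frac_ring_hom_ring)
  fix i j assume ij: "i \<in> Omega n" "j \<in> Omega n"
  have "loc_mat R S n P i j \<ominus>\<^bsub>loc_ring R S\<^esub> mat_one (loc_ring R S) n i j \<in> loc_set R S A"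
    using loc ij unfolding mat_congruent_one_def by blast
  moreover have "loc_mat R S n P i j = frac R S (P i j) \<one>"
    unfolding loc_mat_def using ij by (intro if_P conjI)
  moreover have "mat_one (loc_ring R S) n i j = frac R S (mat_one R n i j) \<one>"
    by (simp only: frac.mat_map_one[symmetric] mat_map_def)
  ultimately have "frac R S (P i j \<ominus> mat_one R n i j) \<one> \<in> loc_set R S A"
    using P by (simp add: frac_diff)
  then show "P i j \<ominus> mat_one R n i j \<in> saturation R S A"
    using P by (intro frac_mem_loc_set_imp_saturation[OF A SA]) simp_all
qed

lemma loc_mat_preserves_form_f_mod_imp:
  assumes J: "\<And>x. x \<in> carrier R \<Longrightarrow> J x \<in> carrier R"
    and J_mult: "\<And>x y. x \<in> carrier R \<Longrightarrow> y \<in> carrier R \<Longrightarrow> J (x \<otimes> y) = J y \<otimes> J x"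
    and J_S: "\<And>s. s \<in> S \<Longrightarrow> J s = s"
    and A: "A \<subseteq> carrier R" and SA: "\<And>s a. s \<in> S \<Longrightarrow> a \<in> A \<Longrightarrow> s \<otimes> a \<in> A"
    and P: "P \<in> mat_carrier R n"
    and loc: "preserves_form_f_mod (loc_ring R S) (loc_inv R S J) n (loc_set R S A) (loc_mat R S n P)"
  shows "preserves_form_f_mod R J n (saturation R S A) P"
  unfolding preserves_form_f_mod_def
proof
  interpret frac: ring_hom_ring R "loc_ring R S" "\<lambda>x. frac R S x \<one>" by (rule frac_ring_hom_ring)
  fix u assume u: "u \<in> vec_carrier R n"
  define a where "a = form_f R J n (mat_vec R n P u) (mat_vec R n P u)"
  define b where "b = form_f R J n u u"
  have ab: "a \<in> carrier R" "b \<in> carrier R"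
    unfolding a_def b_def using u P by (simp_all add: form_f_closed J mat_vec_closed)
  have hom_J: "\<And>x. x \<in> carrier R \<Longrightarrow> frac R S (J x) \<one> = loc_inv R S J (frac R S x \<one>)"
    using loc_inv_frac[OF J J_mult J_S _ one_S] by simp
  have "form_f (loc_ring R S) (loc_inv R S J) n
        (mat_vec (loc_ring R S) n (loc_mat R S n P) ((\<lambda>x. frac R S x \<one>) \<circ> u))
        (mat_vec (loc_ring R S) n (loc_mat R S n P) ((\<lambda>x. frac R S x \<one>) \<circ> u))
      \<ominus>\<^bsub>loc_ring R S\<^esub> form_f (loc_ring R S) (loc_inv R S J) n ((\<lambda>x. frac R S x \<one>) \<circ> u)
        ((\<lambda>x. frac R S x \<one>) \<circ> u) \<in> loc_set R S A"
    using loc frac.vec_map_carrier[OF u] unfolding preserves_form_f_mod_def by blast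
  then have "frac R S a \<one> \<ominus>\<^bsub>loc_ring R S\<^esub> frac R S b \<one> \<in> loc_set R S A"
    unfolding a_def b_def
    by (simp add: loc_mat_eq_mat_map[OF P] frac.mat_map_vec[OF P u]
        frac.map_form_f[of J, OF J hom_J] u mat_vec_closed[OF P u])
  then have "frac R S (a \<ominus> b) \<one> \<in> loc_set R S A"
    using ab by (simp add: frac_diff)
  then show "a \<ominus> b \<in> saturation R S A"
    using ab by (intro frac_mem_loc_set_imp_saturation[OF A SA]) simp_all
qed

lemma inter_saturation_subset_iff:
  "K \<subseteq> carrier R \<Longrightarrow> K \<inter> saturation R S A \<subseteq> A \<longleftrightarrow> (\<forall>x\<in>K. \<forall>t\<in>S. t \<otimes> x \<in> A \<longrightarrow> x \<in> A)"
  unfolding saturation_def by blast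

lemma multiples_inter_saturation_subset:
  assumes s: "s \<in> S" "\<And>r. r \<in> saturation R S A \<Longrightarrow> s \<otimes> r \<in> A"
    and c: "c \<in> S" and SA: "\<And>t a. t \<in> S \<Longrightarrow> a \<in> A \<Longrightarrow> t \<otimes> a \<in> A"
  shows "{c \<otimes> s \<otimes> r | r. r \<in> carrier R} \<inter> saturation R S A \<subseteq> A"
proof
  fix x assume "x \<in> {c \<otimes> s \<otimes> r | r. r \<in> carrier R} \<inter> saturation R S A"
  then obtain r t where r: "r \<in> carrier R" "x = c \<otimes> s \<otimes> r" and t: "t \<in> S" "t \<otimes> x \<in> A"
    unfolding saturation_def by blast
  have "(t \<otimes> c \<otimes> s) \<otimes> r = t \<otimes> x" using r s(1) c t(1) by (simp add: m_assoc)
  then have "(t \<otimes> c \<otimes> s) \<otimes> r \<in> A" using t(2) by simp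
  then have "r \<in> saturation R S A"
    unfolding saturation_def using r(1) S_mult_closed[OF S_mult_closed[OF t(1) c] s(1)] by blast
  then have "c \<otimes> (s \<otimes> r) \<in> A" using SA[OF c] s(2) by blast
  then show "x \<in> A" using r s(1) c by (simp add: m_assoc)
qed

lemma ideal_multiples:
  assumes s: "s \<in> S"
  shows "ideal {s \<otimes> r | r. r \<in> carrier R} R"
proof (rule idealI[OF ring_axioms])
  show "subgroup {s \<otimes> r | r. r \<in> carrier R} (add_monoid R)"
    using additive_subgroup_left_multiples[OF ideal.axioms(1)[OF oneideal] S_closed[OF s]]
    by (rule additive_subgroup.a_subgroup)
next
  fix a x assume "a \<in> {s \<otimes> r | r. r \<in> carrier R}" and x: "x \<in> carrier R"
  then obtain r where r: "a = s \<otimes> r" "r \<in> carrier R" by blast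
  have "x \<otimes> a = s \<otimes> (x \<otimes> r)" using r s x by (simp add: S_left_commute)
  then show "x \<otimes> a \<in> {s \<otimes> r | r. r \<in> carrier R}" using r(2) x by blast
  have "a \<otimes> x = s \<otimes> (r \<otimes> x)" using r s x by (simp add: m_assoc)
  then show "a \<otimes> x \<in> {s \<otimes> r | r. r \<in> carrier R}" using r(2) x by blast
qed

end

section \<open>Injectivity of the localization map on cosets\<close>

locale unitary_localization = central_localization R S + hyperbolic_form R J l Lam n
  for R (structure) and S and J and l and Lam and n +
  fixes I Gam :: "'a set"
  assumes J_mult: "\<And>x y. x \<in> carrier R \<Longrightarrow> y \<in> carrier R \<Longrightarrow> J (x \<otimes> y) = J y \<otimes> J x"
    and J_fixes_S: "\<And>s. s \<in> S \<Longrightarrow> J s = s"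
    and I_ideal: "ideal I R"
    and Gam_subgroup: "additive_subgroup Gam R"
    and S_mult_Gam: "\<And>s g. s \<in> S \<Longrightarrow> g \<in> Gam \<Longrightarrow> s \<otimes> g \<in> Gam"
begin

abbreviation "L \<equiv> loc_ring R S"
abbreviation "H \<equiv> U2n_rel R J l Lam n I Gam"
abbreviation "H_loc \<equiv> U2n_rel L (loc_inv R S J) (frac R S l \<one>) (loc_set R S Lam) n
  (loc_set R S I) (loc_set R S Gam)"
abbreviation "G_loc \<equiv> U2n_group L (loc_inv R S J) (frac R S l \<one>) (loc_set R S Lam) n"
abbreviation "H_sat \<equiv> U2n_rel R J l Lam n (saturation R S I) (saturation R S Gam)"

lemma S_mult_I: "s \<in> S \<Longrightarrow> x \<in> I \<Longrightarrow> s \<otimes> x \<in> I"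
  using ideal.I_l_closed[OF I_ideal] by simp

lemma I_subset: "I \<subseteq> carrier R"
  using additive_subgroup.a_subset[OF ideal.axioms(1)[OF I_ideal]] .

lemma Gam_subset: "Gam \<subseteq> carrier R"
  using additive_subgroup.a_subset[OF Gam_subgroup] .

lemma H_subgroup: "subgroup H G"
  by (rule U2n_rel_subgroup[OF I_ideal Gam_subgroup])

lemma H_sat_subgroup: "subgroup H_sat G"
  by (rule U2n_rel_subgroup[OF ideal_saturation[OF I_ideal] additive_subgroup_saturation[OF Gam_subgroup S_mult_Gam]])

lemma H_subset_H_sat: "H \<subseteq> H_sat"
proof
  fix M assume "M \<in> H"
  then show "M \<in> H_sat"
    using saturation_subset[OF I_subset] saturation_subset[OF Gam_subset]
    unfolding U2n_rel_iff mat_congruent_one_def preserves_form_f_mod_def by blast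
qed

lemma U2n_rel_inter_H_sat:
  assumes "K \<inter> saturation R S I \<subseteq> I" "Del \<inter> saturation R S Gam \<subseteq> Gam"
  shows "U2n_rel R J l Lam n K Del \<inter> H_sat \<subseteq> H"
proof
  fix M assume "M \<in> U2n_rel R J l Lam n K Del \<inter> H_sat"
  then show "M \<in> H"
    using assms unfolding Int_iff U2n_rel_iff mat_congruent_one_def preserves_form_f_mod_def by blast
qed

lemma loc_mat_mult:
  assumes "M \<in> mat_carrier R n" "N \<in> mat_carrier R n"
  shows "loc_mat R S n (mat_mult R n M N) = mat_mult L n (loc_mat R S n M) (loc_mat R S n N)"
proof -
  interpret frac: ring_hom_ring R L "\<lambda>x. frac R S x \<one>" by (rule frac_ring_hom_ring)
  show ?thesis
    using assms by (simp add: loc_mat_eq_mat_map mat_mult_closed frac.mat_map_mult)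
qed

lemma loc_mat_one: "loc_mat R S n (mat_one R n) = mat_one L n"
proof -
  interpret frac: ring_hom_ring R L "\<lambda>x. frac R S x \<one>" by (rule frac_ring_hom_ring)
  show ?thesis by (simp add: loc_mat_eq_mat_map mat_one_closed frac.mat_map_one)
qed

lemma mat_one_H_loc: "mat_one L n \<in> H_loc"
proof (rule ring.mat_one_U2n_rel[OF ring_loc_ring])
  show "\<And>x. x \<in> carrier L \<Longrightarrow> loc_inv R S J x \<in> carrier L"
    by (rule loc_inv_closed[OF J_closed J_mult J_fixes_S])
  show "frac R S l \<one> \<in> carrier L" using l_closed one_S by simp
  show "\<zero>\<^bsub>L\<^esub> \<in> loc_set R S Lam"
    by (rule zero_loc_set[OF zero_Lam])
  show "\<zero>\<^bsub>L\<^esub> \<in> loc_set R S I"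
    by (rule zero_loc_set[OF additive_subgroup.zero_closed[OF ideal.axioms(1)[OF I_ideal]]])
  show "\<zero>\<^bsub>L\<^esub> \<in> loc_set R S Gam"
    by (rule zero_loc_set[OF additive_subgroup.zero_closed[OF Gam_subgroup]])
qed

lemma loc_mat_mem_phi_psi:
  assumes "M \<in> U2n R J l Lam n"
  shows "loc_mat R S n M \<in> phi_map R J l Lam n I Gam S (psi_map R J l Lam n I Gam M)"
proof -
  interpret frac: ring_hom_ring R L "\<lambda>x. frac R S x \<one>" by (rule frac_ring_hom_ring)
  have "loc_mat R S n M \<in> mat_carrier L n"
    using U2n_mat_carrier[OF assms] by (simp add: loc_mat_eq_mat_map frac.mat_map_carrier)
  then have "loc_mat R S n M = mat_mult L n (mat_one L n) (loc_mat R S n M)"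
    by (simp add: ring.mat_mult_one_left[OF ring_loc_ring])
  then have "loc_mat R S n M \<in> H_loc #>\<^bsub>G_loc\<^esub> loc_mat R S n M"
    using mat_one_H_loc unfolding r_coset_def U2n_group_def by auto
  moreover have "M \<in> H #>\<^bsub>G\<^esub> M"
    using group.rcos_self[OF group_U2n_group _ H_subgroup] assms by simp
  ultimately show ?thesis
    unfolding phi_map_def psi_map_def by (rule UnionI[OF imageI, rotated])
qed

lemma loc_mat_in_H_loc_imp_H_sat:
  assumes P: "P \<in> U2n R J l Lam n" and loc: "loc_mat R S n P \<in> H_loc"
  shows "P \<in> H_sat"
proof -
  have P_mat: "P \<in> mat_carrier R n" by (rule U2n_mat_carrier[OF P])
  have cong: "mat_congruent_one L n (loc_set R S I) (loc_mat R S n P)"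
    and pres: "preserves_form_f_mod L (loc_inv R S J) n (loc_set R S Gam) (loc_mat R S n P)"
    using loc unfolding U2n_rel_iff by blast+
  show ?thesis
    using P loc_mat_congruent_one_imp[OF I_subset S_mult_I P_mat cong]
      loc_mat_preserves_form_f_mod_imp[OF J_closed J_mult J_fixes_S Gam_subset S_mult_Gam P_mat pres]
    by (simp add: U2n_rel_iff)
qed

lemma loc_mat_mult_inv:
  assumes M: "M \<in> U2n R J l Lam n" and P: "P \<in> U2n R J l Lam n" and g: "g \<in> mat_carrier L n"
    and M_loc: "loc_mat R S n M = mat_mult L n g (loc_mat R S n P)"
  shows "loc_mat R S n (M \<otimes>\<^bsub>G\<^esub> inv\<^bsub>G\<^esub> P) = g"
proof -
  interpret G: group G by (rule group_U2n_group)
  have PG: "P \<in> carrier G" using P by simp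
  have mats: "M \<in> mat_carrier R n" "P \<in> mat_carrier R n" "inv\<^bsub>G\<^esub> P \<in> mat_carrier R n"
    using M P G.inv_closed[OF PG] by (simp_all add: U2n_mat_carrier)
  have "loc_mat R S n (M \<otimes>\<^bsub>G\<^esub> inv\<^bsub>G\<^esub> P)
      = mat_mult L n (mat_mult L n g (loc_mat R S n P)) (loc_mat R S n (inv\<^bsub>G\<^esub> P))"
    by (simp add: loc_mat_mult mats M_loc)
  also have "\<dots> = mat_mult L n g (loc_mat R S n (P \<otimes>\<^bsub>G\<^esub> inv\<^bsub>G\<^esub> P))"
    using mats g
    by (simp add: loc_mat_mult ring.mat_mult_assoc[OF ring_loc_ring] loc_mat_eq_mat_map
        ring_hom_ring.mat_map_carrier[OF frac_ring_hom_ring])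
  also have "\<dots> = g"
    using g G.r_inv[OF PG] by (simp add: loc_mat_one ring.mat_mult_one_right[OF ring_loc_ring])
  finally show ?thesis .
qed

lemma phi_psi_eq_imp_quotient_H_sat:
  assumes M: "M \<in> U2n R J l Lam n" and N: "N \<in> U2n R J l Lam n"
    and eq: "phi_map R J l Lam n I Gam S (psi_map R J l Lam n I Gam M) =
      phi_map R J l Lam n I Gam S (psi_map R J l Lam n I Gam N)"
  shows "M \<otimes>\<^bsub>G\<^esub> inv\<^bsub>G\<^esub> N \<in> H_sat"
proof -
  interpret G: group G by (rule group_U2n_group)
  have "loc_mat R S n M \<in> phi_map R J l Lam n I Gam S (psi_map R J l Lam n I Gam N)"
    using loc_mat_mem_phi_psi[OF M] eq by simp
  then obtain P where P: "P \<in> H #>\<^bsub>G\<^esub> N" and "loc_mat R S n M \<in> H_loc #>\<^bsub>G_loc\<^esub> loc_mat R S n P"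
    unfolding phi_map_def psi_map_def by blast
  then obtain g where g: "g \<in> H_loc" and M_loc: "loc_mat R S n M = mat_mult L n g (loc_mat R S n P)"
    unfolding r_coset_def by (auto simp: U2n_group_def)
  obtain h where h: "h \<in> H" and P_eq: "P = h \<otimes>\<^bsub>G\<^esub> N"
    using P unfolding r_coset_def by blast
  have hG: "h \<in> carrier G" using h subgroup.subset[OF H_subgroup] by blast
  have PG: "P \<in> carrier G" using P_eq hG N by (simp add: U2n_mult_closed)
  have g_mat: "g \<in> mat_carrier L n"
    using g by (simp add: U2n_rel_iff U2n_def GL_def)
  have "M \<otimes>\<^bsub>G\<^esub> inv\<^bsub>G\<^esub> P \<in> carrier G"
    using M PG by (intro G.m_closed G.inv_closed) simp_all
  then have "M \<otimes>\<^bsub>G\<^esub> inv\<^bsub>G\<^esub> P \<in> H_sat"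
    using loc_mat_mult_inv[OF M _ g_mat M_loc] PG g by (simp add: loc_mat_in_H_loc_imp_H_sat)
  moreover have "h \<in> H_sat" using h H_subset_H_sat by blast
  ultimately have "(M \<otimes>\<^bsub>G\<^esub> inv\<^bsub>G\<^esub> P) \<otimes>\<^bsub>G\<^esub> h \<in> H_sat"
    by (rule subgroup.m_closed[OF H_sat_subgroup])
  moreover have "M \<in> carrier G" "N \<in> carrier G" using M N by simp_all
  ultimately show ?thesis
    using hG unfolding P_eq by (simp only: G.inv_mult_group G.m_assoc G.l_inv G.r_one
        G.inv_closed G.m_closed)
qed

lemma inj_on_phi_psi:
  assumes K: "ideal K R" and Del: "additive_subgroup Del R"
    and K_sat: "K \<inter> saturation R S I \<subseteq> I" and Del_sat: "Del \<inter> saturation R S Gam \<subseteq> Gam"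
  shows "inj_on (phi_map R J l Lam n I Gam S)
    (psi_map R J l Lam n I Gam ` U2n_rel R J l Lam n K Del)"
proof (rule inj_onI)
  fix U V
  assume "U \<in> psi_map R J l Lam n I Gam ` U2n_rel R J l Lam n K Del"
    and "V \<in> psi_map R J l Lam n I Gam ` U2n_rel R J l Lam n K Del"
  then obtain M N where M: "M \<in> U2n_rel R J l Lam n K Del" and U: "U = psi_map R J l Lam n I Gam M"
    and N: "N \<in> U2n_rel R J l Lam n K Del" and V: "V = psi_map R J l Lam n I Gam N"
    by blast
  assume "phi_map R J l Lam n I Gam S U = phi_map R J l Lam n I Gam S V"
  then have eq: "phi_map R J l Lam n I Gam S (psi_map R J l Lam n I Gam M) =
      phi_map R J l Lam n I Gam S (psi_map R J l Lam n I Gam N)"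
    unfolding U V .
  interpret G: group G by (rule group_U2n_group)
  have MU: "M \<in> U2n R J l Lam n" and NU: "N \<in> U2n R J l Lam n"
    using M N by (simp_all add: U2n_rel_iff)
  then have MG: "M \<in> carrier G" and NG: "N \<in> carrier G" by simp_all
  have "M \<otimes>\<^bsub>G\<^esub> inv\<^bsub>G\<^esub> N \<in> U2n_rel R J l Lam n K Del"
    using M N subgroup.m_closed[OF U2n_rel_subgroup[OF K Del]] subgroup.m_inv_closed[OF U2n_rel_subgroup[OF K Del]]
    by blast
  moreover have "M \<otimes>\<^bsub>G\<^esub> inv\<^bsub>G\<^esub> N \<in> H_sat"
    by (rule phi_psi_eq_imp_quotient_H_sat[OF MU NU eq])
  ultimately have "M \<otimes>\<^bsub>G\<^esub> inv\<^bsub>G\<^esub> N \<in> H"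
    using U2n_rel_inter_H_sat[OF K_sat Del_sat] by blast
  then have "M \<in> H #>\<^bsub>G\<^esub> N"
    by (rule subgroup.rcos_module_rev[OF H_subgroup group_U2n_group NG MG])
  then show "U = V"
    unfolding U V psi_map_def using G.repr_independence[OF _ NG H_subgroup] by simp
qed

lemma inj_on_phi_psi_multiples:
  assumes s0: "s0 \<in> S"
    and I_sat: "{s0 \<otimes> r | r. r \<in> carrier R} \<inter> saturation R S I \<subseteq> I"
    and Gam_sat: "{s0 \<otimes> r | r. r \<in> carrier R} \<inter> saturation R S Gam \<subseteq> Gam"
  shows "inj_on (phi_map R J l Lam n I Gam S) (psi_map R J l Lam n I Gam `
    U2n_rel R J l Lam n {s0 \<otimes> r | r. r \<in> carrier R} {s0 \<otimes> a | a. a \<in> Lam})"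
proof (rule inj_on_phi_psi[OF ideal_multiples[OF s0]
      additive_subgroup_left_multiples[OF Lam_subgroup S_closed[OF s0]] I_sat])
  show "{s0 \<otimes> a | a. a \<in> Lam} \<inter> saturation R S Gam \<subseteq> Gam"
    using Gam_sat additive_subgroup.a_subset[OF Lam_subgroup] by blast
qed

end

lemma norm_sums_subset:
  assumes "\<zero>\<^bsub>R\<^esub> \<in> Z" "\<And>c. c \<in> C' \<Longrightarrow> c \<otimes>\<^bsub>R\<^esub> J c \<in> Z"
    and "\<And>x y. x \<in> Z \<Longrightarrow> y \<in> Z \<Longrightarrow> x \<oplus>\<^bsub>R\<^esub> y \<in> Z" "\<And>x. x \<in> Z \<Longrightarrow> \<ominus>\<^bsub>R\<^esub> x \<in> Z"
  shows "norm_sums R J C' \<subseteq> Z"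
proof
  fix x assume "x \<in> norm_sums R J C'"
  then show "x \<in> Z" by induction (use assms in auto)
qed

locale form_ideal_at_maximal_ideal =
  fixes R :: "'a ring" (structure) and J :: "'a \<Rightarrow> 'a" and l :: 'a
    and Lam I Gam C' m :: "'a set" and n :: nat
  assumes form_ring: "form_ring R J l Lam"
    and C'_central: "C' \<subseteq> ring_center R"
    and noetherian: "noetherian_module R (norm_sums R J C')"
    and form_ideal: "form_ideal R J l Lam I Gam"
    and maximal: "maximalideal m (R\<lparr>carrier := norm_sums R J C'\<rparr>)"
begin

abbreviation "C \<equiv> norm_sums R J C'"
abbreviation "S \<equiv> C - m"

sublocale ring R using form_ring unfolding form_ring_def by blast

lemma J_closed: "x \<in> carrier R \<Longrightarrow> J x \<in> carrier R"
  and J_add: "x \<in> carrier R \<Longrightarrow> y \<in> carrier R \<Longrightarrow> J (x \<oplus> y) = J x \<oplus> J y"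
  and J_mult: "x \<in> carrier R \<Longrightarrow> y \<in> carrier R \<Longrightarrow> J (x \<otimes> y) = J y \<otimes> J x"
  and J_J: "x \<in> carrier R \<Longrightarrow> J (J x) = x"
  using form_ring unfolding form_ring_def is_involution_def by blast+

lemma J_zero: "J \<zero> = \<zero>"
proof -
  have "J \<zero> = J \<zero> \<oplus> J \<zero>" using J_add[of \<zero> \<zero>] by simp
  then show ?thesis using J_closed[of \<zero>] by (metis l_zero zero_closed add.r_cancel)
qed

lemma J_minus: "x \<in> carrier R \<Longrightarrow> J (\<ominus> x) = \<ominus> J x"
proof -
  assume x: "x \<in> carrier R"
  have "J x \<oplus> J (\<ominus> x) = \<zero>" using J_add[of x "\<ominus> x"] x by (simp add: J_zero r_neg)
  then show ?thesis using x J_closed by (metis a_inv_closed add.inv_equality a_comm)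
qed

lemma l_closed: "l \<in> carrier R"
  using form_ring unfolding form_ring_def ring_center_def by blast

lemma Lam_subgroup: "additive_subgroup Lam R"
  using form_ring unfolding form_ring_def form_parameter_def by blast

lemma I_ideal: "ideal I R" and Gam_subgroup: "additive_subgroup Gam R"
  and Gam_conj: "a \<in> carrier R \<Longrightarrow> g \<in> Gam \<Longrightarrow> a \<otimes> g \<otimes> J a \<in> Gam"
  using form_ideal unfolding form_ideal_def by blast+

lemma J_ring_center:
  assumes "d \<in> ring_center R"
  shows "J d \<in> ring_center R"
  unfolding ring_center_def
proof (intro CollectI conjI ballI)
  have d: "d \<in> carrier R" "\<And>r. r \<in> carrier R \<Longrightarrow> d \<otimes> r = r \<otimes> d"
    using assms unfolding ring_center_def by auto
  then show "J d \<in> carrier R" by (simp add: J_closed)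
  fix r assume r: "r \<in> carrier R"
  have "J d \<otimes> r = J (J r \<otimes> d)" using d(1) r by (simp add: J_mult J_J J_closed)
  also have "\<dots> = J (d \<otimes> J r)" using d(2)[of "J r"] r by (simp add: J_closed)
  also have "\<dots> = r \<otimes> J d" using d(1) r by (simp add: J_mult J_J J_closed)
  finally show "J d \<otimes> r = r \<otimes> J d" .
qed

lemma Gam_closed: "g \<in> Gam \<Longrightarrow> g \<in> carrier R"
  using additive_subgroup.a_subset[OF Gam_subgroup] by blast

abbreviation "Gam_stable_center \<equiv> {c \<in> ring_center R. J c = c \<and> (\<forall>g\<in>Gam. c \<otimes> g \<in> Gam)}"

lemma zero_mem_Gam_stable_center: "\<zero> \<in> Gam_stable_center"
  using J_zero Gam_closed additive_subgroup.zero_closed[OF Gam_subgroup]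
  by (simp add: ring_center_def)

text \<open>The generator \<open>c \<otimes> J c\<close> maps \<open>\<Gamma>\<close> into itself since \<open>c \<otimes> J c \<otimes> g = c \<otimes> g \<otimes> J c\<close>,
  the conjugate of a central element being central.\<close>

lemma norm_mem_Gam_stable_center:
  assumes "c \<in> C'"
  shows "c \<otimes> J c \<in> Gam_stable_center"
proof -
  have c: "c \<in> ring_center R" "J c \<in> ring_center R"
    using assms C'_central J_ring_center by auto
  then have cc: "c \<in> carrier R" "J c \<in> carrier R" by (simp_all add: ring_center_closed)
  have "J (c \<otimes> J c) = c \<otimes> J c" using cc by (simp add: J_mult J_J)
  moreover have "c \<otimes> J c \<otimes> g \<in> Gam" if "g \<in> Gam" for g
  proof -
    have g: "g \<in> carrier R" using that Gam_closed by blast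
    have "J c \<otimes> g = g \<otimes> J c" using c(2) g unfolding ring_center_def by blast
    then have "c \<otimes> J c \<otimes> g = c \<otimes> g \<otimes> J c" using cc g by (simp add: m_assoc)
    then show ?thesis using Gam_conj[OF cc(1) that] by simp
  qed
  ultimately show ?thesis
    using ring_center_mult[OF c] by blast
qed

lemma add_mem_Gam_stable_center:
  assumes "x \<in> Gam_stable_center" "y \<in> Gam_stable_center"
  shows "x \<oplus> y \<in> Gam_stable_center"
proof -
  have x: "x \<in> ring_center R" "J x = x" "\<And>g. g \<in> Gam \<Longrightarrow> x \<otimes> g \<in> Gam"
    and y: "y \<in> ring_center R" "J y = y" "\<And>g. g \<in> Gam \<Longrightarrow> y \<otimes> g \<in> Gam"
    using assms by auto
  have "(x \<oplus> y) \<otimes> g \<in> Gam" if "g \<in> Gam" for g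
    using x y that Gam_closed ring_center_closed
    by (simp add: l_distr additive_subgroup.a_closed[OF Gam_subgroup])
  moreover have "J (x \<oplus> y) = x \<oplus> y" using x y ring_center_closed by (simp add: J_add)
  ultimately show ?thesis
    using ring_center_add[OF x(1) y(1)] by blast
qed

lemma minus_mem_Gam_stable_center:
  assumes "x \<in> Gam_stable_center"
  shows "\<ominus> x \<in> Gam_stable_center"
proof -
  have x: "x \<in> ring_center R" "J x = x" "\<And>g. g \<in> Gam \<Longrightarrow> x \<otimes> g \<in> Gam"
    using assms by auto
  have "\<ominus> x \<otimes> g \<in> Gam" if "g \<in> Gam" for g
    using x that Gam_closed ring_center_closed
    by (simp add: l_minus additive_subgroup.a_inv_closed[OF Gam_subgroup])
  moreover have "J (\<ominus> x) = \<ominus> x" using x ring_center_closed by (simp add: J_minus)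
  ultimately show ?thesis
    using ring_center_minus[OF x(1)] by blast
qed

lemma C_subset_Gam_stable_center: "C \<subseteq> Gam_stable_center"
  by (rule norm_sums_subset[OF zero_mem_Gam_stable_center norm_mem_Gam_stable_center
        add_mem_Gam_stable_center minus_mem_Gam_stable_center])

lemma C_closed: "c \<in> C \<Longrightarrow> c \<in> carrier R"
  and C_central: "c \<in> C \<Longrightarrow> r \<in> carrier R \<Longrightarrow> c \<otimes> r = r \<otimes> c"
  and C_J: "c \<in> C \<Longrightarrow> J c = c"
  and C_Gam: "c \<in> C \<Longrightarrow> g \<in> Gam \<Longrightarrow> c \<otimes> g \<in> Gam"
  using C_subset_Gam_stable_center unfolding ring_center_def by blast+

lemma cring_C: "cring (R\<lparr>carrier := C\<rparr>)"
proof -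
  interpret C: ring "R\<lparr>carrier := C\<rparr>"
    using maximal unfolding maximalideal_def ideal_def by blast
  have "comm_monoid (R\<lparr>carrier := C\<rparr>)"
    by (rule C.monoid_comm_monoidI) (auto simp: C_central C_closed)
  then show ?thesis by (intro cring.intro C.ring_axioms)
qed

lemma S_localization: "central_localization R S"
proof
  interpret m: primeideal m "R\<lparr>carrier := C\<rparr>"
    by (rule cring.maximalideal_prime[OF cring_C maximal])
  show "S \<subseteq> carrier R" using C_closed by blast
  show "\<And>s x. s \<in> S \<Longrightarrow> x \<in> carrier R \<Longrightarrow> s \<otimes> x = x \<otimes> s" using C_central by blast
  show "\<one> \<in> S" using m.one_imp_carrier m.I_notcarr m.one_closed by auto
  show "\<And>s t. s \<in> S \<Longrightarrow> t \<in> S \<Longrightarrow> s \<otimes> t \<in> S"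
    using m.I_prime m.m_closed by auto
qed

sublocale unitary_localization R S J l Lam n I Gam
proof (intro unitary_localization.intro unitary_localization_axioms.intro hyperbolic_form.intro
    hyperbolic_form_axioms.intro S_localization ring_axioms)
  show "\<And>x. x \<in> carrier R \<Longrightarrow> J x \<in> carrier R" by (rule J_closed)
  show "l \<in> carrier R" by (rule l_closed)
  show "additive_subgroup Lam R" by (rule Lam_subgroup)
  show "\<And>x y. x \<in> carrier R \<Longrightarrow> y \<in> carrier R \<Longrightarrow> J (x \<otimes> y) = J y \<otimes> J x" by (rule J_mult)
  show "\<And>s. s \<in> S \<Longrightarrow> J s = s" using C_J by blast
  show "ideal I R" by (rule I_ideal)
  show "additive_subgroup Gam R" by (rule Gam_subgroup)
  show "\<And>s g. s \<in> S \<Longrightarrow> g \<in> Gam \<Longrightarrow> s \<otimes> g \<in> Gam" using C_Gam by blast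
qed

lemma exists_s0:
  "\<exists>s0\<in>S. {s0 \<otimes> r | r. r \<in> carrier R} \<inter> saturation R S I \<subseteq> I \<and>
     {s0 \<otimes> r | r. r \<in> carrier R} \<inter> saturation R S Gam \<subseteq> Gam"
proof -
  have C: "C \<subseteq> carrier R" "S \<subseteq> C" using C_closed by blast+
  obtain s1 where s1: "s1 \<in> S" "\<And>r. r \<in> saturation R S I \<Longrightarrow> s1 \<otimes> r \<in> I"
    using saturation_annihilator[OF noetherian C(1) C_central C(2) ideal.axioms(1)[OF I_ideal]]
      ideal.I_l_closed[OF I_ideal] C_closed by blast
  obtain s2 where s2: "s2 \<in> S" "\<And>r. r \<in> saturation R S Gam \<Longrightarrow> s2 \<otimes> r \<in> Gam"
    using saturation_annihilator[OF noetherian C(1) C_central C(2) Gam_subgroup C_Gam] by blast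
  have "s2 \<otimes> s1 = s1 \<otimes> s2" using s1(1) s2(1) by (simp add: S_commute)
  then have "{s1 \<otimes> s2 \<otimes> r | r. r \<in> carrier R} \<inter> saturation R S I \<subseteq> I"
    using multiples_inter_saturation_subset[OF s1 s2(1) S_mult_I] by simp
  moreover have "{s1 \<otimes> s2 \<otimes> r | r. r \<in> carrier R} \<inter> saturation R S Gam \<subseteq> Gam"
    using multiples_inter_saturation_subset[OF s2 s1(1) S_mult_Gam] .
  ultimately show ?thesis
    using S_mult_closed[OF s1(1) s2(1)] by blast
qed

end

theorem lemma4p2:
  fixes R :: "'a ring" and J :: "'a \<Rightarrow> 'a" and l :: 'a
    and Lam I Gam C' m :: "'a set" and n :: nat
  assumes "n \<ge> 3"
    and "form_ring R J l Lam"
    and "subring C' R" and "C' \<subseteq> ring_center R"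
    and "noetherian_module R (norm_sums R J C')"
    and "form_ideal R J l Lam I Gam"
    and "maximalideal m (R\<lparr>carrier := norm_sums R J C'\<rparr>)"
  shows "\<exists>s0 \<in> norm_sums R J C' - m.
     (\<forall>x \<in> {s0 \<otimes>\<^bsub>R\<^esub> r | r. r \<in> carrier R}. \<forall>t \<in> norm_sums R J C' - m.
        t \<otimes>\<^bsub>R\<^esub> x \<in> I \<longrightarrow> x \<in> I) \<and>
     (\<forall>x \<in> {s0 \<otimes>\<^bsub>R\<^esub> r | r. r \<in> carrier R}. \<forall>t \<in> norm_sums R J C' - m.
        t \<otimes>\<^bsub>R\<^esub> x \<in> Gam \<longrightarrow> x \<in> Gam) \<and>
     inj_on (phi_map R J l Lam n I Gam (norm_sums R J C' - m))
       (psi_map R J l Lam n I Gam `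
          U2n_rel R J l Lam n {s0 \<otimes>\<^bsub>R\<^esub> r | r. r \<in> carrier R} {s0 \<otimes>\<^bsub>R\<^esub> a | a. a \<in> Lam})"
proof -
  interpret form_ideal_at_maximal_ideal R J l Lam I Gam C' m n
    by (rule form_ideal_at_maximal_ideal.intro) (fact assms)+
  obtain s0 where s0: "s0 \<in> S"
    and I_sat: "{s0 \<otimes>\<^bsub>R\<^esub> r | r. r \<in> carrier R} \<inter> saturation R S I \<subseteq> I"
    and Gam_sat: "{s0 \<otimes>\<^bsub>R\<^esub> r | r. r \<in> carrier R} \<inter> saturation R S Gam \<subseteq> Gam"
    using exists_s0 by blast
  have K_carrier: "{s0 \<otimes>\<^bsub>R\<^esub> r | r. r \<in> carrier R} \<subseteq> carrier R" using s0 by auto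
  have "\<forall>x\<in>{s0 \<otimes>\<^bsub>R\<^esub> r | r. r \<in> carrier R}. \<forall>t\<in>S. t \<otimes>\<^bsub>R\<^esub> x \<in> I \<longrightarrow> x \<in> I"
    "\<forall>x\<in>{s0 \<otimes>\<^bsub>R\<^esub> r | r. r \<in> carrier R}. \<forall>t\<in>S. t \<otimes>\<^bsub>R\<^esub> x \<in> Gam \<longrightarrow> x \<in> Gam"
    using I_sat Gam_sat inter_saturation_subset_iff[OF K_carrier] by blast+
  then show ?thesis
    using s0 inj_on_phi_psi_multiples[OF s0 I_sat Gam_sat] by blast
qed

end
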